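(* Let $H=(H,\Delta,\epsilon,\phi,S,\alpha,\beta)$ be a quasi-Hopf algebra over a field $k$ (not necessarily finite-dimensional), and let $\nu\colon H\to Q$ be a surjective morphism of quasibialgebras onto a finite-dimensional quasibialgebra $Q$. Then $S(\ker\nu)\subseteq\ker\nu$. Consequently $S$ induces an anti-algebra endomorphism $\overline S$ of $Q$ with $\overline S\circ\nu=\nu\circ S$, the triple $(\overline S,\nu(\alpha),\nu(\beta))$ is a quasi-antipode for $Q$, and $\nu$ is a morphism of quasi-Hopf algebras; i.e. $Q$ is a quotient quasi-Hopf algebra of $H$.
   Context: A quasibialgebra $(H,\Delta,\epsilon,\phi)$ over a field $k$ consists of an algebra $H$, algebra maps $\Delta\colon H\to H\otimes H$, $h\mapsto h_{(1)}\otimes h_{(2)}$, and $\epsilon\colon H\to k$, and an invertible $\phi=\phi^{(1)}\otimes\phi^{(2)}\otimes\phi^{(3)}\in H^{\otimes 3}$ (with $\phi^{-1}=\phi^{(-1)}\otimes\phi^{(-2)}\otimes\phi^{(-3)}$) such that $(\epsilon\otimes H)\Delta(h)=h=(H\otimes\epsilon)\Delta(h)$; $(H\otimes\Delta)\Delta(h)\,\phi=\phi\,(\Delta\otimes H)\Delta(h)$; $(H\otimes H\otimes\Delta)(\phi)(\Delta\otimes H\otimes H)(\phi)=(1\otimes\phi)(H\otimes\Delta\otimes H)(\phi)(\phi\otimes 1)$; and $(H\otimes\epsilon\otimes H)(\phi)=1$. A morphism of quasibialgebras $f\colon(H,\phi)\to(L,\psi)$ is an algebra map with $\Delta f=(f\otimes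 f)\Delta$, $\epsilon f=\epsilon$, $(f\otimes f\otimes f)(\phi)=\psi$. A quasi-antipode is a triple $(S,\alpha,\beta)$ with $\alpha,\beta\in H$ and $S$ an anti-algebra endomorphism of $H$ (not required to be bijective) such that for all $h\in H$: $S(h_{(1)})\alpha h_{(2)}=\epsilon(h)\alpha$, $h_{(1)}\beta S(h_{(2)})=\epsilon(h)\beta$, $\phi^{(1)}\beta S(\phi^{(2)})\alpha\phi^{(3)}=1$, $S(\phi^{(-1)})\alpha\phi^{(-2)}\beta S(\phi^{(-3)})=1$. A quasi-Hopf algebra is a quasibialgebra with a quasi-antipode; a morphism of quasi-Hopf algebras is a quasibialgebra morphism $f$ with $S'f=fS$, $f(\alpha)=\alpha'$, $f(\beta)=\beta'$. *)

theory Defs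
  imports Complex_Main
begin

text \<open>
An algebra over a field k is a type 'h of class ring_1 together with a
scalar multiplication sc :: 'k => 'h => 'h making it a k-module such that the product
is k-bilinear.  Elements of tensor powers of H are represented by finite formal sums
of pure tensors (lists of pairs / triples / quadruples).  Two such formal sums are
identified (as elements of the tensor product over k) iff every k-multilinear form
takes the same value on them; this is the usual universal property of the tensor
product tested against the target k (tensor products of vector spaces are separated
by the multilinear forms).
\<close>

definition klin :: "('k::field \<Rightarrow> 'a::ab_group_add \<Rightarrow> 'a) \<Rightarrow> ('k \<Rightarrow> 'b::ab_group_add \<Rightarrow> 'b) \<Rightarrow> ('a \<Rightarrow> 'b) \<Rightarrow> bool" where
  "klin sa sb f \<longleftrightarrow> (\<forall>x y. f (x + y) = f x + f y) \<and> (\<forall>c x. f (sa c x) = sb c (f x))"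

definition kalgebra :: "('k::field \<Rightarrow> 'h::ring_1 \<Rightarrow> 'h) \<Rightarrow> bool" where
  "kalgebra sc \<longleftrightarrow> module sc \<and> (\<forall>c x y. sc c (x * y) = sc c x * y \<and> sc c (x * y) = x * sc c y)"

definition fin_dim :: "('k::field \<Rightarrow> 'h::ring_1 \<Rightarrow> 'h) \<Rightarrow> bool" where
  "fin_dim sc \<longleftrightarrow> (\<exists>B. finite B \<and> module.span sc B = UNIV)"

definition alg_map :: "('k::field \<Rightarrow> 'a::ring_1 \<Rightarrow> 'a) \<Rightarrow> ('k \<Rightarrow> 'b::ring_1 \<Rightarrow> 'b) \<Rightarrow> ('a \<Rightarrow> 'b) \<Rightarrow> bool" where
  "alg_map sa sb f \<longleftrightarrow> klin sa sb f \<and> (\<forall>x y. f (x * y) = f x * f y) \<and> f 1 = 1"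

definition anti_alg_map :: "('k::field \<Rightarrow> 'a::ring_1 \<Rightarrow> 'a) \<Rightarrow> ('k \<Rightarrow> 'b::ring_1 \<Rightarrow> 'b) \<Rightarrow> ('a \<Rightarrow> 'b) \<Rightarrow> bool" where
  "anti_alg_map sa sb f \<longleftrightarrow> klin sa sb f \<and> (\<forall>x y. f (x * y) = f y * f x) \<and> f 1 = 1"

definition bilin :: "('k::field \<Rightarrow> 'h::ab_group_add \<Rightarrow> 'h) \<Rightarrow> ('h \<Rightarrow> 'h \<Rightarrow> 'k) \<Rightarrow> bool" where
  "bilin sc B \<longleftrightarrow> (\<forall>y. klin sc (*) (\<lambda>x. B x y)) \<and> (\<forall>x. klin sc (*) (\<lambda>y. B x y))"

definition trilin :: "('k::field \<Rightarrow> 'h::ab_group_add \<Rightarrow> 'h) \<Rightarrow> ('h \<Rightarrow> 'h \<Rightarrow> 'h \<Rightarrow> 'k) \<Rightarrow> bool" where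
  "trilin sc T \<longleftrightarrow> (\<forall>y z. klin sc (*) (\<lambda>x. T x y z)) \<and> (\<forall>x z. klin sc (*) (\<lambda>y. T x y z))
                 \<and> (\<forall>x y. klin sc (*) (\<lambda>z. T x y z))"

definition quadlin :: "('k::field \<Rightarrow> 'h::ab_group_add \<Rightarrow> 'h) \<Rightarrow> ('h \<Rightarrow> 'h \<Rightarrow> 'h \<Rightarrow> 'h \<Rightarrow> 'k) \<Rightarrow> bool" where
  "quadlin sc F \<longleftrightarrow> (\<forall>y z w. klin sc (*) (\<lambda>x. F x y z w)) \<and> (\<forall>x z w. klin sc (*) (\<lambda>y. F x y z w))
                 \<and> (\<forall>x y w. klin sc (*) (\<lambda>z. F x y z w)) \<and> (\<forall>x y z. klin sc (*) (\<lambda>w. F x y z w))"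

definition teq2 :: "('k::field \<Rightarrow> 'h::ab_group_add \<Rightarrow> 'h) \<Rightarrow> ('h \<times> 'h) list \<Rightarrow> ('h \<times> 'h) list \<Rightarrow> bool" where
  "teq2 sc xs ys \<longleftrightarrow> (\<forall>B. bilin sc B \<longrightarrow>
      sum_list (map (\<lambda>(a, b). B a b) xs) = sum_list (map (\<lambda>(a, b). B a b) ys))"

definition teq3 :: "('k::field \<Rightarrow> 'h::ab_group_add \<Rightarrow> 'h) \<Rightarrow> ('h \<times> 'h \<times> 'h) list \<Rightarrow> ('h \<times> 'h \<times> 'h) list \<Rightarrow> bool" where
  "teq3 sc xs ys \<longleftrightarrow> (\<forall>T. trilin sc T \<longrightarrow>
      sum_list (map (\<lambda>(a, b, c). T a b c) xs) = sum_list (map (\<lambda>(a, b, c). T a b c) ys))"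

definition teq4 :: "('k::field \<Rightarrow> 'h::ab_group_add \<Rightarrow> 'h) \<Rightarrow> ('h \<times> 'h \<times> 'h \<times> 'h) list \<Rightarrow> ('h \<times> 'h \<times> 'h \<times> 'h) list \<Rightarrow> bool" where
  "teq4 sc xs ys \<longleftrightarrow> (\<forall>F. quadlin sc F \<longrightarrow>
      sum_list (map (\<lambda>(a, b, c, d). F a b c d) xs) = sum_list (map (\<lambda>(a, b, c, d). F a b c d) ys))"

definition tmul2 :: "('h::ring_1 \<times> 'h) list \<Rightarrow> ('h \<times> 'h) list \<Rightarrow> ('h \<times> 'h) list" where
  "tmul2 xs ys = concat (map (\<lambda>(a, b). map (\<lambda>(c, d). (a * c, b * d)) ys) xs)"

definition tmul3 :: "('h::ring_1 \<times> 'h \<times> 'h) list \<Rightarrow> ('h \<times> 'h \<times> 'h) list \<Rightarrow> ('h \<times> 'h \<times> 'h) list" where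
  "tmul3 xs ys = concat (map (\<lambda>(a, b, c). map (\<lambda>(a', b', c'). (a * a', b * b', c * c')) ys) xs)"

definition tmul4 :: "('h::ring_1 \<times> 'h \<times> 'h \<times> 'h) list \<Rightarrow> ('h \<times> 'h \<times> 'h \<times> 'h) list \<Rightarrow> ('h \<times> 'h \<times> 'h \<times> 'h) list" where
  "tmul4 xs ys = concat (map (\<lambda>(a, b, c, d). map (\<lambda>(a', b', c', d'). (a * a', b * b', c * c', d * d')) ys) xs)"

definition id_D :: "('h \<Rightarrow> ('h \<times> 'h) list) \<Rightarrow> ('h \<times> 'h) list \<Rightarrow> ('h \<times> 'h \<times> 'h) list" where
  "id_D D xs = concat (map (\<lambda>(a, b). map (\<lambda>(c, d). (a, c, d)) (D b)) xs)"

definition D_id :: "('h \<Rightarrow> ('h \<times> 'h) list) \<Rightarrow> ('h \<times> 'h) list \<Rightarrow> ('h \<times> 'h \<times> 'h) list" where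
  "D_id D xs = concat (map (\<lambda>(a, b). map (\<lambda>(c, d). (c, d, b)) (D a)) xs)"

definition id_id_D :: "('h \<Rightarrow> ('h \<times> 'h) list) \<Rightarrow> ('h \<times> 'h \<times> 'h) list \<Rightarrow> ('h \<times> 'h \<times> 'h \<times> 'h) list" where
  "id_id_D D xs = concat (map (\<lambda>(a, b, c). map (\<lambda>(d, e). (a, b, d, e)) (D c)) xs)"

definition id_D_id :: "('h \<Rightarrow> ('h \<times> 'h) list) \<Rightarrow> ('h \<times> 'h \<times> 'h) list \<Rightarrow> ('h \<times> 'h \<times> 'h \<times> 'h) list" where
  "id_D_id D xs = concat (map (\<lambda>(a, b, c). map (\<lambda>(d, e). (a, d, e, c)) (D b)) xs)"

definition D_id_id :: "('h \<Rightarrow> ('h \<times> 'h) list) \<Rightarrow> ('h \<times> 'h \<times> 'h) list \<Rightarrow> ('h \<times> 'h \<times> 'h \<times> 'h) list" where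
  "D_id_id D xs = concat (map (\<lambda>(a, b, c). map (\<lambda>(d, e). (d, e, b, c)) (D a)) xs)"

definition quasibialgebra ::
  "('k::field \<Rightarrow> 'h::ring_1 \<Rightarrow> 'h) \<Rightarrow> ('h \<Rightarrow> ('h \<times> 'h) list) \<Rightarrow> ('h \<Rightarrow> 'k) \<Rightarrow>
   ('h \<times> 'h \<times> 'h) list \<Rightarrow> ('h \<times> 'h \<times> 'h) list \<Rightarrow> bool" where
  "quasibialgebra sc D eps phi phii \<longleftrightarrow>
     kalgebra sc \<and>
     \<comment> \<open>\<Delta> is an algebra map H \<rightarrow> H\<otimes>H\<close>
     (\<forall>x y. teq2 sc (D (x + y)) (D x @ D y)) \<and>
     (\<forall>c x. teq2 sc (D (sc c x)) (map (\<lambda>(a, b). (sc c a, b)) (D x))) \<and>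
     (\<forall>x y. teq2 sc (D (x * y)) (tmul2 (D x) (D y))) \<and>
     teq2 sc (D 1) [(1, 1)] \<and>
     \<comment> \<open>\<epsilon> is an algebra map H \<rightarrow> k\<close>
     alg_map sc (*) eps \<and>
     \<comment> \<open>\<phi> invertible with inverse \<phi>i\<close>
     teq3 sc (tmul3 phi phii) [(1, 1, 1)] \<and> teq3 sc (tmul3 phii phi) [(1, 1, 1)] \<and>
     \<comment> \<open>counit axioms\<close>
     (\<forall>h. sum_list (map (\<lambda>(a, b). sc (eps a) b) (D h)) = h) \<and>
     (\<forall>h. sum_list (map (\<lambda>(a, b). sc (eps b) a) (D h)) = h) \<and>
     \<comment> \<open>quasi-coassociativity\<close>
     (\<forall>h. teq3 sc (tmul3 (id_D D (D h)) phi) (tmul3 phi (D_id D (D h)))) \<and>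
     \<comment> \<open>3-cocycle (pentagon) condition\<close>
     teq4 sc (tmul4 (id_id_D D phi) (D_id_id D phi))
             (tmul4 (tmul4 (map (\<lambda>(a, b, c). (1, a, b, c)) phi) (id_D_id D phi))
                    (map (\<lambda>(a, b, c). (a, b, c, 1)) phi)) \<and>
     \<comment> \<open>normalization (H\<otimes>\<epsilon>\<otimes>H)(\<phi>) = 1\<close>
     teq2 sc (map (\<lambda>(a, b, c). (sc (eps b) a, c)) phi) [(1, 1)]"

text \<open>Quasi-antipode (S, \<alpha>, \<beta>); S is an anti-algebra endomorphism (not necessarily bijective).\<close>
definition quasi_antipode ::
  "('k::field \<Rightarrow> 'h::ring_1 \<Rightarrow> 'h) \<Rightarrow> ('h \<Rightarrow> ('h \<times> 'h) list) \<Rightarrow> ('h \<Rightarrow> 'k) \<Rightarrow>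
   ('h \<times> 'h \<times> 'h) list \<Rightarrow> ('h \<times> 'h \<times> 'h) list \<Rightarrow> ('h \<Rightarrow> 'h) \<Rightarrow> 'h \<Rightarrow> 'h \<Rightarrow> bool" where
  "quasi_antipode sc D eps phi phii S \<alpha> \<beta> \<longleftrightarrow>
     anti_alg_map sc sc S \<and>
     (\<forall>h. sum_list (map (\<lambda>(a, b). S a * \<alpha> * b) (D h)) = sc (eps h) \<alpha>) \<and>
     (\<forall>h. sum_list (map (\<lambda>(a, b). a * \<beta> * S b) (D h)) = sc (eps h) \<beta>) \<and>
     sum_list (map (\<lambda>(a, b, c). a * \<beta> * S b * \<alpha> * c) phi) = 1 \<and>
     sum_list (map (\<lambda>(a, b, c). S a * \<alpha> * b * \<beta> * S c) phii) = 1"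

definition quasi_hopf ::
  "('k::field \<Rightarrow> 'h::ring_1 \<Rightarrow> 'h) \<Rightarrow> ('h \<Rightarrow> ('h \<times> 'h) list) \<Rightarrow> ('h \<Rightarrow> 'k) \<Rightarrow>
   ('h \<times> 'h \<times> 'h) list \<Rightarrow> ('h \<times> 'h \<times> 'h) list \<Rightarrow> ('h \<Rightarrow> 'h) \<Rightarrow> 'h \<Rightarrow> 'h \<Rightarrow> bool" where
  "quasi_hopf sc D eps phi phii S \<alpha> \<beta> \<longleftrightarrow>
     quasibialgebra sc D eps phi phii \<and> quasi_antipode sc D eps phi phii S \<alpha> \<beta>"

definition qba_morphism ::
  "('k::field \<Rightarrow> 'h::ring_1 \<Rightarrow> 'h) \<Rightarrow> ('h \<Rightarrow> ('h \<times> 'h) list) \<Rightarrow> ('h \<Rightarrow> 'k) \<Rightarrow> ('h \<times> 'h \<times> 'h) list \<Rightarrow>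
   ('k \<Rightarrow> 'l::ring_1 \<Rightarrow> 'l) \<Rightarrow> ('l \<Rightarrow> ('l \<times> 'l) list) \<Rightarrow> ('l \<Rightarrow> 'k) \<Rightarrow> ('l \<times> 'l \<times> 'l) list \<Rightarrow>
   ('h \<Rightarrow> 'l) \<Rightarrow> bool" where
  "qba_morphism scH DH epsH phiH scL DL epsL phiL f \<longleftrightarrow>
     alg_map scH scL f \<and>
     (\<forall>h. teq2 scL (DL (f h)) (map (\<lambda>(a, b). (f a, f b)) (DH h))) \<and>
     (\<forall>h. epsL (f h) = epsH h) \<and>
     teq3 scL (map (\<lambda>(a, b, c). (f a, f b, f c)) phiH) phiL"

definition qhopf_morphism ::
  "('k::field \<Rightarrow> 'h::ring_1 \<Rightarrow> 'h) \<Rightarrow> ('h \<Rightarrow> ('h \<times> 'h) list) \<Rightarrow> ('h \<Rightarrow> 'k) \<Rightarrow> ('h \<times> 'h \<times> 'h) list \<Rightarrow>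
   ('h \<Rightarrow> 'h) \<Rightarrow> 'h \<Rightarrow> 'h \<Rightarrow>
   ('k \<Rightarrow> 'l::ring_1 \<Rightarrow> 'l) \<Rightarrow> ('l \<Rightarrow> ('l \<times> 'l) list) \<Rightarrow> ('l \<Rightarrow> 'k) \<Rightarrow> ('l \<times> 'l \<times> 'l) list \<Rightarrow>
   ('l \<Rightarrow> 'l) \<Rightarrow> 'l \<Rightarrow> 'l \<Rightarrow> ('h \<Rightarrow> 'l) \<Rightarrow> bool" where
  "qhopf_morphism scH DH epsH phiH SH \<alpha>H \<beta>H scL DL epsL phiL SL \<alpha>L \<beta>L f \<longleftrightarrow>
     qba_morphism scH DH epsH phiH scL DL epsL phiL f \<and>
     (\<forall>h. SL (f h) = f (SH h)) \<and> f \<alpha>H = \<alpha>L \<and> f \<beta>H = \<beta>L"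

end

theory Submission
  imports Defs "HOL-Library.Function_Algebras"
begin

(* The Galois map of H, \<tau>(x \<otimes> y) = x S(\<phi>^-1) \<alpha> \<phi>^-2 y_1 \<otimes> \<phi>^-3 y_2, the quasi-Hopf version
   of x \<otimes> y \<mapsto> x y_1 \<otimes> y_2, has the right inverse \<sigma>(x \<otimes> y) = x \<phi>^1 \<beta> S(y_1 \<phi>^2) \<otimes> y_2 \<phi>^3, and
   quasi-coassociativity together with S(h_1) \<alpha> h_2 = \<epsilon>(h) \<alpha> gives
   \<tau>(S(h_1) \<otimes> h_2) = S(\<phi>^-1) \<alpha> \<phi>^-2 \<otimes> h \<phi>^-3.
   The formula for \<tau> makes sense on Q \<otimes> Q with S, \<alpha> and \<phi>^-1 pushed through \<nu>, and since \<nu> is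
   surjective the right inverse \<sigma> survives there.  As Q \<otimes> Q is finite-dimensional, \<tau> is then
   injective on it.  For h \<in> ker \<nu>, the element \<Sum> \<nu>(S h_1) \<otimes> \<nu>(h_2) is mapped by \<tau> to a tensor
   with \<nu>(h) = 0 in its second factor, so it vanishes, and applying id \<otimes> \<epsilon> gives \<nu>(S h) = 0.
   Hence S descends to Q, and the quasi-antipode axioms for Q are the images of those for H.

   Tensors are only accessible through their pairings with multilinear forms, so the argument
   runs on the dual side: C \<mapsto> C \<circ> \<tau> is an injective, hence surjective, linear endomorphism of
   the finite-dimensional space of bilinear forms on Q. *)

section \<open>Formal tensors\<close>

definition eval2 :: "('h \<times> 'h) list \<Rightarrow> ('h \<Rightarrow> 'h \<Rightarrow> 'k::comm_monoid_add) \<Rightarrow> 'k" where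
  "eval2 xs B = sum_list (map (\<lambda>(a, b). B a b) xs)"
definition eval3 :: "('h \<times> 'h \<times> 'h) list \<Rightarrow> ('h \<Rightarrow> 'h \<Rightarrow> 'h \<Rightarrow> 'k::comm_monoid_add) \<Rightarrow> 'k" where
  "eval3 xs T = sum_list (map (\<lambda>(a, b, c). T a b c) xs)"
definition eval4 ::
  "('h \<times> 'h \<times> 'h \<times> 'h) list \<Rightarrow> ('h \<Rightarrow> 'h \<Rightarrow> 'h \<Rightarrow> 'h \<Rightarrow> 'k::comm_monoid_add) \<Rightarrow> 'k" where
  "eval4 xs F = sum_list (map (\<lambda>(a, b, c, d). F a b c d) xs)"

lemma teq2_iff: "teq2 sc xs ys \<longleftrightarrow> (\<forall>B. bilin sc B \<longrightarrow> eval2 xs B = eval2 ys B)"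
  unfolding teq2_def eval2_def ..
lemma teq3_iff: "teq3 sc xs ys \<longleftrightarrow> (\<forall>T. trilin sc T \<longrightarrow> eval3 xs T = eval3 ys T)"
  unfolding teq3_def eval3_def ..
lemma teq4_iff: "teq4 sc xs ys \<longleftrightarrow> (\<forall>F. quadlin sc F \<longrightarrow> eval4 xs F = eval4 ys F)"
  unfolding teq4_def eval4_def ..

lemma teq2D: "teq2 sc xs ys \<Longrightarrow> bilin sc B \<Longrightarrow> eval2 xs B = eval2 ys B"
  by (simp add: teq2_iff)
lemma teq3D: "teq3 sc xs ys \<Longrightarrow> trilin sc T \<Longrightarrow> eval3 xs T = eval3 ys T"
  by (simp add: teq3_iff)
lemma teq4D: "teq4 sc xs ys \<Longrightarrow> quadlin sc F \<Longrightarrow> eval4 xs F = eval4 ys F"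
  by (simp add: teq4_iff)

lemma teq3_sym: "teq3 sc xs ys \<Longrightarrow> teq3 sc ys xs" by (simp add: teq3_iff)
lemma teq4_sym: "teq4 sc xs ys \<Longrightarrow> teq4 sc ys xs" by (simp add: teq4_iff)
lemma teq3_trans[trans]: "teq3 sc xs ys \<Longrightarrow> teq3 sc ys zs \<Longrightarrow> teq3 sc xs zs" by (simp add: teq3_iff)
lemma teq4_trans[trans]: "teq4 sc xs ys \<Longrightarrow> teq4 sc ys zs \<Longrightarrow> teq4 sc xs zs" by (simp add: teq4_iff)

lemma eval2_simps[simp]:
  "eval2 [] B = 0" "eval2 ((a, b) # xs) B = B a b + eval2 xs B"
  "eval2 (xs @ ys) B = eval2 xs B + eval2 ys B"
  by (simp_all add: eval2_def)
lemma eval3_simps[simp]: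
  "eval3 [] T = 0" "eval3 ((a, b, c) # xs) T = T a b c + eval3 xs T"
  "eval3 (xs @ ys) T = eval3 xs T + eval3 ys T"
  by (simp_all add: eval3_def)
lemma eval4_simps[simp]:
  "eval4 [] F = 0" "eval4 ((a, b, c, d) # xs) F = F a b c d + eval4 xs F"
  "eval4 (xs @ ys) F = eval4 xs F + eval4 ys F"
  by (simp_all add: eval4_def)

lemma eval2_map: "eval2 (map f xs) B = sum_list (map (\<lambda>x. case f x of (a, b) \<Rightarrow> B a b) xs)"
  by (simp add: eval2_def comp_def)
lemma eval3_map: "eval3 (map f xs) T = sum_list (map (\<lambda>x. case f x of (a, b, c) \<Rightarrow> T a b c) xs)"
  by (simp add: eval3_def comp_def)
lemma eval4_map: "eval4 (map f xs) F = sum_list (map (\<lambda>x. case f x of (a, b, c, d) \<Rightarrow> F a b c d) xs)"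
  by (simp add: eval4_def comp_def)

lemma eval2_zero[simp]: "eval2 xs (\<lambda>a b. 0 :: 'k::comm_monoid_add) = 0"
  by (induct xs) auto
lemma eval3_zero[simp]: "eval3 xs (\<lambda>a b c. 0 :: 'k::comm_monoid_add) = 0"
  by (induct xs) auto

lemma eval2_add_form: "eval2 xs (\<lambda>a b. B a b + C a b) = eval2 xs B + eval2 xs C"
  by (induct xs) (auto simp: algebra_simps)
lemma eval3_add_form: "eval3 xs (\<lambda>a b c. T a b c + T' a b c) = eval3 xs T + eval3 xs T'"
  by (induct xs) (auto simp: algebra_simps)
lemma eval2_cmult_form: "eval2 xs (\<lambda>a b. (c::'k::comm_semiring_0) * B a b) = c * eval2 xs B"
  by (induct xs) (auto simp: algebra_simps)
lemma eval3_cmult_form: "eval3 xs (\<lambda>a b d. (c::'k::comm_semiring_0) * T a b d) = c * eval3 xs T"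
  by (induct xs) (auto simp: algebra_simps)

lemma eval3_cong: "(\<And>a b c. (a, b, c) \<in> set xs \<Longrightarrow> T a b c = T' a b c) \<Longrightarrow> eval3 xs T = eval3 xs T'"
  by (induct xs) auto
lemma eval4_cong:
  "(\<And>a b c d. (a, b, c, d) \<in> set xs \<Longrightarrow> F a b c d = F' a b c d) \<Longrightarrow> eval4 xs F = eval4 xs F'"
  by (induct xs) auto

lemma sum_list_map_swap:
  fixes f :: "'a \<Rightarrow> 'b \<Rightarrow> 'c::comm_monoid_add"
  shows "sum_list (map (\<lambda>x. sum_list (map (\<lambda>y. f x y) ys)) xs) =
         sum_list (map (\<lambda>y. sum_list (map (\<lambda>x. f x y) xs)) ys)"
  by (induct xs) (auto simp: sum_list_addf)

lemma eval2_eval3_swap: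
  "eval2 xs (\<lambda>a b. eval3 ys (\<lambda>c d e. f a b c d e)) =
   eval3 ys (\<lambda>c d e. eval2 xs (\<lambda>a b. f a b c d e))"
  unfolding eval2_def eval3_def case_prod_unfold by (rule sum_list_map_swap)
lemma eval3_eval3_swap:
  "eval3 xs (\<lambda>a b c. eval3 ys (\<lambda>d e g. f a b c d e g)) =
   eval3 ys (\<lambda>d e g. eval3 xs (\<lambda>a b c. f a b c d e g))"
  unfolding eval3_def case_prod_unfold by (rule sum_list_map_swap)

lemma tmul2_simps[simp]:
  "tmul2 [] ys = []" "tmul2 ((a, b) # xs) ys = map (\<lambda>(c, d). (a * c, b * d)) ys @ tmul2 xs ys"
  by (simp_all add: tmul2_def)
lemma tmul3_simps[simp]:
  "tmul3 [] ys = []"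
  "tmul3 ((a, b, c) # xs) ys = map (\<lambda>(a', b', c'). (a * a', b * b', c * c')) ys @ tmul3 xs ys"
  by (simp_all add: tmul3_def)
lemma tmul4_simps[simp]:
  "tmul4 [] ys = []"
  "tmul4 ((a, b, c, d) # xs) ys =
   map (\<lambda>(a', b', c', d'). (a * a', b * b', c * c', d * d')) ys @ tmul4 xs ys"
  by (simp_all add: tmul4_def)

lemma eval2_tmul2: "eval2 (tmul2 xs ys) B = eval2 xs (\<lambda>a b. eval2 ys (\<lambda>c d. B (a * c) (b * d)))"
  by (induct xs) (auto simp: eval2_map case_prod_unfold eval2_def comp_def)
lemma eval3_tmul3:
  "eval3 (tmul3 xs ys) T = eval3 xs (\<lambda>a b c. eval3 ys (\<lambda>a' b' c'. T (a * a') (b * b') (c * c')))"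
  by (induct xs) (auto simp: eval3_map case_prod_unfold eval3_def comp_def)
lemma eval4_tmul4:
  "eval4 (tmul4 xs ys) F =
   eval4 xs (\<lambda>a b c d. eval4 ys (\<lambda>a' b' c' d'. F (a * a') (b * b') (c * c') (d * d')))"
  by (induct xs) (auto simp: eval4_map case_prod_unfold eval4_def comp_def)

lemma tmul3_assoc: "tmul3 (tmul3 xs ys) zs = tmul3 xs (tmul3 ys zs)"
  by (induct xs) (auto simp: tmul3_def map_concat comp_def case_prod_unfold mult.assoc)
lemma tmul4_assoc: "tmul4 (tmul4 xs ys) zs = tmul4 xs (tmul4 ys zs)"
  by (induct xs) (auto simp: tmul4_def map_concat comp_def case_prod_unfold mult.assoc)

lemma tmul3_one[simp]: "tmul3 xs [(1, 1, 1)] = xs" "tmul3 [(1, 1, 1)] xs = xs"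
  by (induct xs) (auto simp: tmul3_def)
lemma tmul4_one[simp]: "tmul4 xs [(1, 1, 1, 1)] = xs" "tmul4 [(1, 1, 1, 1)] xs = xs"
  by (induct xs) (auto simp: tmul4_def)

definition one_tensor :: "('h::one \<times> 'h \<times> 'h) list \<Rightarrow> ('h \<times> 'h \<times> 'h \<times> 'h) list" where
  "one_tensor xs = map (\<lambda>(a, b, c). (1, a, b, c)) xs"
definition tensor_one :: "('h::one \<times> 'h \<times> 'h) list \<Rightarrow> ('h \<times> 'h \<times> 'h \<times> 'h) list" where
  "tensor_one xs = map (\<lambda>(a, b, c). (a, b, c, 1)) xs"

lemma eval4_one_tensor: "eval4 (one_tensor xs) F = eval3 xs (\<lambda>a b c. F 1 a b c)"
  by (induct xs) (auto simp: one_tensor_def)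
lemma eval4_tensor_one: "eval4 (tensor_one xs) F = eval3 xs (\<lambda>a b c. F a b c 1)"
  by (induct xs) (auto simp: tensor_one_def)
lemma one_tensor_tmul: "tmul4 (one_tensor xs) (one_tensor ys) = one_tensor (tmul3 xs ys)"
  by (induct xs) (auto simp: one_tensor_def tmul4_def tmul3_def case_prod_unfold)

lemma eval3_id_D: "eval3 (id_D D xs) T = eval2 xs (\<lambda>a b. eval2 (D b) (\<lambda>c d. T a c d))"
  by (induct xs) (auto simp: id_D_def eval3_map eval2_def case_prod_unfold comp_def)
lemma eval3_D_id: "eval3 (D_id D xs) T = eval2 xs (\<lambda>a b. eval2 (D a) (\<lambda>c d. T c d b))"
  by (induct xs) (auto simp: D_id_def eval3_map eval2_def case_prod_unfold comp_def)
lemma eval4_id_id_D: "eval4 (id_id_D D xs) F = eval3 xs (\<lambda>a b c. eval2 (D c) (\<lambda>d e. F a b d e))"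
  by (induct xs) (auto simp: id_id_D_def eval4_map eval2_def case_prod_unfold comp_def)
lemma eval4_id_D_id: "eval4 (id_D_id D xs) F = eval3 xs (\<lambda>a b c. eval2 (D b) (\<lambda>d e. F a d e c))"
  by (induct xs) (auto simp: id_D_id_def eval4_map eval2_def case_prod_unfold comp_def)
lemma eval4_D_id_id: "eval4 (D_id_id D xs) F = eval3 xs (\<lambda>a b c. eval2 (D a) (\<lambda>d e. F d e b c))"
  by (induct xs) (auto simp: D_id_id_def eval4_map eval2_def case_prod_unfold comp_def)

lemma klin_add: "klin sa sb f \<Longrightarrow> f (x + y) = f x + f y"
  by (simp add: klin_def)
lemma klin_scale: "klin sa sb f \<Longrightarrow> f (sa c x) = sb c (f x)"
  by (simp add: klin_def)
lemma klin_comp: "klin sa sb f \<Longrightarrow> klin sb sc g \<Longrightarrow> klin sa sc (\<lambda>x. g (f x))"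
  by (simp add: klin_def)

context
  fixes f :: "'a::ab_group_add \<Rightarrow> 'b::ab_group_add"
    and sa :: "'k::field \<Rightarrow> 'a \<Rightarrow> 'a" and sb :: "'k \<Rightarrow> 'b \<Rightarrow> 'b"
  assumes f: "klin sa sb f"
begin

lemma klin_zero: "f 0 = 0"
  using klin_add[OF f, of 0 0] by simp

lemma klin_diff: "f (x - y) = f x - f y"
  using klin_add[OF f, of "x - y" y] by (simp add: eq_diff_eq)

lemma klin_sum: "f (sum g A) = (\<Sum>x\<in>A. f (g x))"
  by (induct A rule: infinite_finite_induct) (auto simp: klin_zero klin_add[OF f])

lemma klin_sum_list: "f (sum_list (map g xs)) = sum_list (map (\<lambda>x. f (g x)) xs)"
  by (induct xs) (auto simp: klin_zero klin_add[OF f])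

lemma klin_sum_list_pairs: "f (sum_list (map (\<lambda>(a, b). g a b) xs)) = eval2 xs (\<lambda>a b. f (g a b))"
  by (induct xs) (auto simp: klin_zero klin_add[OF f])

lemma klin_sum_list_triples:
  "f (sum_list (map (\<lambda>(a, b, c). g a b c) xs)) = eval3 xs (\<lambda>a b c. f (g a b c))"
  by (induct xs) (auto simp: klin_zero klin_add[OF f])

end

lemma klin_cmult: "klin sa (*) f \<Longrightarrow> klin sa (*) (\<lambda>x. (c::'k::field) * f x)"
  by (simp add: klin_def algebra_simps)
lemma klin_multc: "klin sa (*) f \<Longrightarrow> klin sa (*) (\<lambda>x. f x * (c::'k::field))"
  by (simp add: klin_def algebra_simps)
lemma klin_eval2:
  "(\<And>a b. klin sa (*) (\<lambda>x. F x a b)) \<Longrightarrow> klin sa (*) (\<lambda>x. eval2 ys (F x) :: 'k::field)"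
  by (induct ys) (auto simp: klin_def algebra_simps)
lemma klin_eval3:
  "(\<And>a b c. klin sa (*) (\<lambda>x. F x a b c)) \<Longrightarrow> klin sa (*) (\<lambda>x. eval3 ys (F x) :: 'k::field)"
  by (induct ys) (auto simp: klin_def algebra_simps)
lemma klin_eval4:
  "(\<And>a b c d. klin sa (*) (\<lambda>x. F x a b c d)) \<Longrightarrow> klin sa (*) (\<lambda>x. eval4 ys (F x) :: 'k::field)"
  by (induct ys) (auto simp: klin_def algebra_simps)

lemma klin_bilin1: "bilin sc B \<Longrightarrow> klin sc sc f \<Longrightarrow> klin sc (*) (\<lambda>x. B (f x) y)"
  by (simp add: bilin_def klin_def)
lemma klin_bilin2: "bilin sc B \<Longrightarrow> klin sc sc f \<Longrightarrow> klin sc (*) (\<lambda>x. B y (f x))"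
  by (simp add: bilin_def klin_def)
lemma klin_trilin1: "trilin sc T \<Longrightarrow> klin sc sc f \<Longrightarrow> klin sc (*) (\<lambda>x. T (f x) y z)"
  by (simp add: trilin_def klin_def)
lemma klin_trilin2: "trilin sc T \<Longrightarrow> klin sc sc f \<Longrightarrow> klin sc (*) (\<lambda>x. T y (f x) z)"
  by (simp add: trilin_def klin_def)
lemma klin_trilin3: "trilin sc T \<Longrightarrow> klin sc sc f \<Longrightarrow> klin sc (*) (\<lambda>x. T y z (f x))"
  by (simp add: trilin_def klin_def)
lemma klin_quadlin1: "quadlin sc F \<Longrightarrow> klin sc sc f \<Longrightarrow> klin sc (*) (\<lambda>x. F (f x) y z w)"
  by (simp add: quadlin_def klin_def)
lemma klin_quadlin2: "quadlin sc F \<Longrightarrow> klin sc sc f \<Longrightarrow> klin sc (*) (\<lambda>x. F y (f x) z w)"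
  by (simp add: quadlin_def klin_def)
lemma klin_quadlin3: "quadlin sc F \<Longrightarrow> klin sc sc f \<Longrightarrow> klin sc (*) (\<lambda>x. F y z (f x) w)"
  by (simp add: quadlin_def klin_def)
lemma klin_quadlin4: "quadlin sc F \<Longrightarrow> klin sc sc f \<Longrightarrow> klin sc (*) (\<lambda>x. F y z w (f x))"
  by (simp add: quadlin_def klin_def)

lemma bilin_scale1: "bilin sc B \<Longrightarrow> B (sc c x) y = c * B x y"
  by (simp add: bilin_def klin_def)
lemma bilin_scale2: "bilin sc B \<Longrightarrow> B x (sc c y) = c * B x y"
  by (simp add: bilin_def klin_def)
lemma trilin_scale2: "trilin sc T \<Longrightarrow> T x (sc c y) z = c * T x y z"
  by (simp add: trilin_def klin_def)

lemma bilinI: "(\<And>y. klin sc (*) (\<lambda>x. B x y)) \<Longrightarrow> (\<And>x. klin sc (*) (\<lambda>y. B x y)) \<Longrightarrow> bilin sc B"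
  by (simp add: bilin_def)
lemma trilinI:
  "(\<And>y z. klin sc (*) (\<lambda>x. T x y z)) \<Longrightarrow> (\<And>x z. klin sc (*) (\<lambda>y. T x y z)) \<Longrightarrow>
   (\<And>x y. klin sc (*) (\<lambda>z. T x y z)) \<Longrightarrow> trilin sc T"
  by (simp add: trilin_def)
lemma quadlinI:
  "(\<And>y z w. klin sc (*) (\<lambda>x. F x y z w)) \<Longrightarrow> (\<And>x z w. klin sc (*) (\<lambda>y. F x y z w)) \<Longrightarrow>
   (\<And>x y w. klin sc (*) (\<lambda>z. F x y z w)) \<Longrightarrow> (\<And>x y z. klin sc (*) (\<lambda>w. F x y z w)) \<Longrightarrow>
   quadlin sc F"
  by (simp add: quadlin_def)

section \<open>Finite-dimensional linear algebra\<close>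

lemma (in vector_space) linear_inj_on_subspace_imp_surj_on:
  assumes W: "subspace W" and G: "finite G" "W \<subseteq> span G"
    and f: "Vector_Spaces.linear scale scale f" and fW: "f ` W \<subseteq> W" and inj: "inj_on f W"
  shows "f ` W = W"
proof -
  obtain B where B: "B \<subseteq> W" "independent B" "W \<subseteq> span B" "card B = dim W"
    using basis_exists by blast
  have finB: "finite B"
    using independent_span_bound[OF G(1) B(2)] B(1) G(2) by blast
  have spB: "span B = W"
    using B(1,3) span_minimal[OF B(1) W] by blast
  interpret f: Vector_Spaces.linear scale scale f by (rule f)
  have indf: "independent (f ` B)"
    by (rule f.independent_injective_image[OF B(2)]) (use inj spB in simp)
  have cardf: "card (f ` B) = card B"
    using card_image inj_on_subset[OF inj B(1)] by blast
  have "W \<subseteq> span (f ` B)"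
  proof
    fix x assume xW: "x \<in> W"
    show "x \<in> span (f ` B)"
    proof (rule ccontr)
      assume nx: "x \<notin> span (f ` B)"
      have "insert x (f ` B) \<subseteq> span B"
        using xW B(1) fW spB by auto
      from independent_span_bound[OF finB independent_insertI[OF nx indf] this]
      have "card (insert x (f ` B)) \<le> card B" by simp
      moreover have "x \<notin> f ` B"
        using nx span_base by blast
      ultimately show False
        using cardf finite_imageI[OF finB, of f] by simp
    qed
  qed
  then have "W \<subseteq> f ` W"
    by (simp add: f.span_image spB)
  with fW show ?thesis
    by (rule equalityI)
qed

lemma sum_fun_apply2: "(sum F A) u v = (\<Sum>a\<in>A. F a u v)"
  by (induct A rule: infinite_finite_induct) auto

definition scale_form :: "'k::field \<Rightarrow> ('a \<Rightarrow> 'a \<Rightarrow> 'k) \<Rightarrow> 'a \<Rightarrow> 'a \<Rightarrow> 'k" where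
  "scale_form c C = (\<lambda>u v. c * C u v)"

interpretation forms: vector_space scale_form
  by unfold_locales (auto simp: scale_form_def fun_eq_iff algebra_simps)

locale k_algebra =
  fixes sc :: "'k::field \<Rightarrow> 'h::ring_1 \<Rightarrow> 'h"
  assumes kalg: "kalgebra sc"
begin

sublocale vector_space sc
  using kalg by (simp add: kalgebra_def module_iff_vector_space)

lemma scale_mult_left: "sc c x * y = sc c (x * y)"
  using kalg unfolding kalgebra_def by metis
lemma scale_mult_right: "x * sc c y = sc c (x * y)"
  using kalg unfolding kalgebra_def by metis

lemma klin_id: "klin sc sc (\<lambda>x. x)"
  by (simp add: klin_def)
lemma klin_mult_right: "klin sc sc f \<Longrightarrow> klin sc sc (\<lambda>x. f x * v)"
  by (simp add: klin_def distrib_right scale_mult_left)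
lemma klin_mult_left: "klin sc sc f \<Longrightarrow> klin sc sc (\<lambda>x. u * f x)"
  by (simp add: klin_def distrib_left scale_mult_right)

lemmas klin_intros = klin_id klin_mult_right klin_mult_left

lemma trilin_eval3_tmul_right:
  assumes T: "trilin sc T"
  shows "trilin sc (\<lambda>a b c. eval3 ys (\<lambda>a' b' c'. T (a * a') (b * b') (c * c')))"
  by (intro trilinI klin_eval3 klin_trilin1[OF T] klin_trilin2[OF T] klin_trilin3[OF T] klin_intros)
lemma trilin_tmul_left:
  assumes T: "trilin sc T"
  shows "trilin sc (\<lambda>a b c. T (a' * a) (b' * b) (c' * c))"
  by (intro trilinI klin_trilin1[OF T] klin_trilin2[OF T] klin_trilin3[OF T] klin_intros)
lemma quadlin_eval4_tmul_right:
  assumes F: "quadlin sc F"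
  shows "quadlin sc (\<lambda>a b c d. eval4 ys (\<lambda>a' b' c' d'. F (a * a') (b * b') (c * c') (d * d')))"
  by (intro quadlinI klin_eval4 klin_quadlin1[OF F] klin_quadlin2[OF F] klin_quadlin3[OF F]
      klin_quadlin4[OF F] klin_intros)
lemma quadlin_tmul_left:
  assumes F: "quadlin sc F"
  shows "quadlin sc (\<lambda>a b c d. F (a' * a) (b' * b) (c' * c) (d' * d))"
  by (intro quadlinI klin_quadlin1[OF F] klin_quadlin2[OF F] klin_quadlin3[OF F] klin_quadlin4[OF F]
      klin_intros)

lemma tmul3_cong1: "teq3 sc xs xs' \<Longrightarrow> teq3 sc (tmul3 xs ys) (tmul3 xs' ys)"
  by (simp add: teq3_iff eval3_tmul3 trilin_eval3_tmul_right)
lemma tmul3_cong2: "teq3 sc ys ys' \<Longrightarrow> teq3 sc (tmul3 xs ys) (tmul3 xs ys')"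
  by (auto simp add: teq3_iff eval3_tmul3 trilin_tmul_left intro!: eval3_cong)
lemma tmul4_cong1: "teq4 sc xs xs' \<Longrightarrow> teq4 sc (tmul4 xs ys) (tmul4 xs' ys)"
  by (simp add: teq4_iff eval4_tmul4 quadlin_eval4_tmul_right)
lemma tmul4_cong2: "teq4 sc ys ys' \<Longrightarrow> teq4 sc (tmul4 xs ys) (tmul4 xs ys')"
  by (auto simp add: teq4_iff eval4_tmul4 quadlin_tmul_left intro!: eval4_cong)

lemma finite_basis:
  assumes "fin_dim sc"
  obtains A where "finite A" "independent A" "span A = UNIV"
proof -
  obtain B where B: "finite B" "span B = UNIV"
    using assms by (auto simp: fin_dim_def)
  obtain A where A: "A \<subseteq> B" "independent A" "B \<subseteq> span A"
    using maximal_independent_subset[of B] by blast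
  have "span A = UNIV"
    using B(2) span_minimal[OF A(3)] by auto
  with A B that show ?thesis
    using finite_subset by blast
qed

lemma klin_representation:
  "independent A \<Longrightarrow> span A = UNIV \<Longrightarrow> klin sc (*) (\<lambda>v. representation A v a)"
  using linear_representation by (simp add: Vector_Spaces.linear_iff klin_def)

lemma functionals_separate:
  assumes fd: "fin_dim sc" and eq: "\<And>f. klin sc (*) f \<Longrightarrow> f x = f y"
  shows "x = y"
proof -
  obtain A where A: "finite A" "independent A" "span A = UNIV"
    using finite_basis[OF fd] .
  note rep = klin_representation[OF A(2,3)]
  have "representation A (x - y) a = 0" for a
    using klin_diff[OF rep, of x y] eq[OF rep] by simp
  then have "x - y = 0"
    using sum_representation_eq[OF A(2), of "x - y" A] A by simp
  then show ?thesis
    by simp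
qed

lemma sum_list_teq2:
  assumes fd: "fin_dim sc" and xy: "teq2 sc xs ys"
    and g: "\<And>f. klin sc (*) f \<Longrightarrow> bilin sc (\<lambda>a b. f (g a b))"
  shows "sum_list (map (\<lambda>(a, b). g a b) xs) = sum_list (map (\<lambda>(a, b). g a b) ys)"
  by (rule functionals_separate[OF fd]) (simp add: klin_sum_list_pairs teq2D[OF xy g])

lemma sum_list_teq3:
  assumes fd: "fin_dim sc" and xy: "teq3 sc xs ys"
    and g: "\<And>f. klin sc (*) f \<Longrightarrow> trilin sc (\<lambda>a b c. f (g a b c))"
  shows "sum_list (map (\<lambda>(a, b, c). g a b c) xs) = sum_list (map (\<lambda>(a, b, c). g a b c) ys)"
  by (rule functionals_separate[OF fd]) (simp add: klin_sum_list_triples teq3D[OF xy g])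

lemma bilin_forms_subspace: "forms.subspace {C. bilin sc C}"
proof -
  have "bilin sc (C + C')" if "bilin sc C" "bilin sc C'" for C C' :: "'h \<Rightarrow> 'h \<Rightarrow> 'k"
    using that by (simp add: bilin_def klin_def algebra_simps)
  moreover have "bilin sc (scale_form c C)" if "bilin sc C" for c and C :: "'h \<Rightarrow> 'h \<Rightarrow> 'k"
    using that by (simp add: bilin_def klin_def scale_form_def algebra_simps)
  moreover have "bilin sc (0 :: 'h \<Rightarrow> 'h \<Rightarrow> 'k)"
    by (simp add: bilin_def klin_def)
  ultimately show ?thesis
    by (simp add: forms.subspace_def)
qed

lemma bilin_forms_finite_span:
  assumes "fin_dim sc"
  shows "\<exists>E. finite E \<and> {C. bilin sc C} \<subseteq> forms.span E"
proof -
  obtain A where A: "finite A" "independent A" "span A = UNIV"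
    using finite_basis[OF assms] .
  define rep where "rep v a = representation A v a" for v a
  define E where "E = (\<lambda>(a, b) u v. rep u a * rep v b) ` (A \<times> A)"
  have reps: "(\<Sum>a\<in>A. sc (rep v a) a) = v" for v
    unfolding rep_def using sum_representation_eq[OF A(2), of v A] A by simp
  have "C \<in> forms.span E" if C: "bilin sc C" for C
  proof -
    have "C = (\<Sum>p\<in>A \<times> A. scale_form (C (fst p) (snd p)) (\<lambda>u v. rep u (fst p) * rep v (snd p)))"
    proof (intro ext)
      fix u v
      have "C u v = C (\<Sum>a\<in>A. sc (rep u a) a) (\<Sum>b\<in>A. sc (rep v b) b)"
        by (simp add: reps)
      also have "\<dots> = (\<Sum>a\<in>A. \<Sum>b\<in>A. rep u a * rep v b * C a b)"
        by (simp add: klin_sum[OF klin_bilin1[OF C klin_id]] klin_sum[OF klin_bilin2[OF C klin_id]]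
            bilin_scale1[OF C] bilin_scale2[OF C] sum_distrib_left mult.assoc mult.left_commute)
          (rule sum.swap)
      also have "\<dots> = (\<Sum>p\<in>A \<times> A.
          scale_form (C (fst p) (snd p)) (\<lambda>u v. rep u (fst p) * rep v (snd p))) u v"
        by (simp add: sum.cartesian_product case_prod_unfold scale_form_def sum_fun_apply2 mult_ac)
      finally show "C u v = \<dots>" .
    qed
    also have "\<dots> \<in> forms.span E"
      unfolding E_def by (intro forms.span_sum forms.span_scale forms.span_base) auto
    finally show ?thesis .
  qed
  moreover have "finite E"
    unfolding E_def using A(1) by simp
  ultimately show ?thesis
    by blast
qed

lemma bilin_form_map_surj:
  fixes T :: "('h \<Rightarrow> 'h \<Rightarrow> 'k) \<Rightarrow> 'h \<Rightarrow> 'h \<Rightarrow> 'k"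
  assumes fd: "fin_dim sc"
    and T_bilin: "\<And>C. bilin sc C \<Longrightarrow> bilin sc (T C)"
    and T_linear: "Vector_Spaces.linear scale_form scale_form T"
    and T_inj: "\<And>C. bilin sc C \<Longrightarrow> T C = 0 \<Longrightarrow> C = 0"
    and B: "bilin sc B"
  shows "\<exists>C. bilin sc C \<and> T C = B"
proof -
  interpret T: Vector_Spaces.linear scale_form scale_form T
    by (rule T_linear)
  obtain E where E: "finite E" "{C. bilin sc C} \<subseteq> forms.span E"
    using bilin_forms_finite_span[OF fd] by blast
  have "T ` {C. bilin sc C} \<subseteq> {C. bilin sc C}"
    by (simp add: image_subset_iff T_bilin)
  moreover have "inj_on T {C. bilin sc C}"
    unfolding T.inj_on_iff_eq_0[OF bilin_forms_subspace] using T_inj by blast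
  ultimately have "T ` {C. bilin sc C} = {C. bilin sc C}"
    by (rule forms.linear_inj_on_subspace_imp_surj_on[OF bilin_forms_subspace E T_linear])
  then have "B \<in> T ` {C. bilin sc C}"
    using B by simp
  then show ?thesis
    by blast
qed

end

section \<open>Quasibialgebras\<close>

locale quasibialg =
  fixes sc :: "'k::field \<Rightarrow> 'h::ring_1 \<Rightarrow> 'h" and D :: "'h \<Rightarrow> ('h \<times> 'h) list"
    and eps :: "'h \<Rightarrow> 'k" and phi phii :: "('h \<times> 'h \<times> 'h) list"
  assumes qba: "quasibialgebra sc D eps phi phii"
begin

sublocale k_algebra sc
  using qba by unfold_locales (simp add: quasibialgebra_def)

lemma D_add: "teq2 sc (D (x + y)) (D x @ D y)"
  using qba by (simp add: quasibialgebra_def)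
lemma D_scale: "teq2 sc (D (sc c x)) (map (\<lambda>(a, b). (sc c a, b)) (D x))"
  using qba by (simp add: quasibialgebra_def)
lemma D_mult: "teq2 sc (D (x * y)) (tmul2 (D x) (D y))"
  using qba by (simp add: quasibialgebra_def)
lemma D_one: "teq2 sc (D 1) [(1, 1)]"
  using qba by (simp add: quasibialgebra_def)
lemma eps_alg_map: "alg_map sc (*) eps"
  using qba by (simp add: quasibialgebra_def)
lemma phi_phii: "teq3 sc (tmul3 phi phii) [(1, 1, 1)]"
  using qba by (simp add: quasibialgebra_def)
lemma phii_phi: "teq3 sc (tmul3 phii phi) [(1, 1, 1)]"
  using qba by (simp add: quasibialgebra_def)
lemma counit_left: "sum_list (map (\<lambda>(a, b). sc (eps a) b) (D h)) = h"
  using qba by (simp add: quasibialgebra_def)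
lemma counit_right: "sum_list (map (\<lambda>(a, b). sc (eps b) a) (D h)) = h"
  using qba by (simp add: quasibialgebra_def)
lemma quasi_coassoc: "teq3 sc (tmul3 (id_D D (D h)) phi) (tmul3 phi (D_id D (D h)))"
  using qba by (simp add: quasibialgebra_def)
lemma pentagon:
  "teq4 sc (tmul4 (id_id_D D phi) (D_id_id D phi))
     (tmul4 (tmul4 (one_tensor phi) (id_D_id D phi)) (tensor_one phi))"
  using qba by (simp add: quasibialgebra_def one_tensor_def tensor_one_def)
lemma phi_normal: "teq2 sc (map (\<lambda>(a, b, c). (sc (eps b) a, c)) phi) [(1, 1)]"
  using qba by (simp add: quasibialgebra_def)

lemma klin_eps: "klin sc (*) eps"
  using eps_alg_map by (simp add: alg_map_def)
lemma eps_mult[simp]: "eps (x * y) = eps x * eps y"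
  using eps_alg_map by (simp add: alg_map_def)
lemma eps_one[simp]: "eps 1 = 1"
  using eps_alg_map by (simp add: alg_map_def)

lemma eval2_D_add: "bilin sc B \<Longrightarrow> eval2 (D (x + y)) B = eval2 (D x) B + eval2 (D y) B"
  using teq2D[OF D_add] by simp
lemma eval2_D_scale:
  assumes B: "bilin sc B"
  shows "eval2 (D (sc c x)) B = c * eval2 (D x) B"
proof -
  have "eval2 (D (sc c x)) B = eval2 (map (\<lambda>(a, b). (sc c a, b)) (D x)) B"
    using teq2D[OF D_scale B] .
  also have "\<dots> = eval2 (D x) (\<lambda>a b. c * B a b)"
    by (simp add: eval2_map eval2_def case_prod_unfold bilin_scale1[OF B] comp_def)
  finally show ?thesis
    by (simp add: eval2_cmult_form)
qed
lemma eval2_D_mult: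
  "bilin sc B \<Longrightarrow> eval2 (D (x * y)) B = eval2 (D x) (\<lambda>a b. eval2 (D y) (\<lambda>c d. B (a * c) (b * d)))"
  using teq2D[OF D_mult] by (simp add: eval2_tmul2)
lemma eval2_D_one: "bilin sc B \<Longrightarrow> eval2 (D 1) B = B 1 1"
  using teq2D[OF D_one] by simp

lemma klin_eval2_D:
  assumes B: "bilin sc B" and f: "klin sc sc f"
  shows "klin sc (*) (\<lambda>x. eval2 (D (f x)) B)"
  using f by (simp add: klin_def eval2_D_add[OF B] eval2_D_scale[OF B])

lemma eval2_D_counit_left:
  assumes g: "klin sc (*) g"
  shows "eval2 (D h) (\<lambda>a b. eps a * g b) = g h"
  using klin_sum_list_pairs[OF g, of "\<lambda>a b. sc (eps a) b" "D h"]
  by (simp add: counit_left klin_scale[OF g])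
lemma eval2_D_counit_right:
  assumes g: "klin sc (*) g"
  shows "eval2 (D h) (\<lambda>a b. eps b * g a) = g h"
  using klin_sum_list_pairs[OF g, of "\<lambda>a b. sc (eps b) a" "D h"]
  by (simp add: counit_right klin_scale[OF g])

lemma eval3_phi_normal: "bilin sc K \<Longrightarrow> eval3 phi (\<lambda>a b c. eps b * K a c) = K 1 1"
  using teq2D[OF phi_normal] by (simp add: eval2_map eval3_def case_prod_unfold bilin_scale1)

lemma quasi_coassoc_inv: "teq3 sc (tmul3 phii (id_D D (D h))) (tmul3 (D_id D (D h)) phii)"
proof -
  let ?A = "id_D D (D h)" and ?B = "D_id D (D h)"
  have "teq3 sc (tmul3 phii ?A) (tmul3 (tmul3 phii ?A) (tmul3 phi phii))"
    using tmul3_cong2[OF teq3_sym[OF phi_phii], of "tmul3 phii ?A"] by simp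
  also have "tmul3 (tmul3 phii ?A) (tmul3 phi phii) = tmul3 phii (tmul3 (tmul3 ?A phi) phii)"
    by (simp add: tmul3_assoc)
  also have "teq3 sc \<dots> (tmul3 phii (tmul3 (tmul3 phi ?B) phii))"
    by (intro tmul3_cong2 tmul3_cong1 quasi_coassoc)
  also have "tmul3 phii (tmul3 (tmul3 phi ?B) phii) = tmul3 (tmul3 phii phi) (tmul3 ?B phii)"
    by (simp add: tmul3_assoc)
  also have "teq3 sc \<dots> (tmul3 [(1, 1, 1)] (tmul3 ?B phii))"
    by (intro tmul3_cong1 phii_phi)
  finally show ?thesis
    by simp
qed

definition one_tensor_eps_phi :: "('h \<times> 'h \<times> 'h) list" where
  "one_tensor_eps_phi = map (\<lambda>(a, b, c). (1, sc (eps a) b, c)) phi"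

(* \<epsilon> applied to the second factor of the pentagon identity. *)
lemma eval3_phi_eq_one_tensor_eps_phi:
  assumes G: "trilin sc G"
  shows "eval3 phi G = eval3 (tmul3 one_tensor_eps_phi phi) G"
proof -
  let ?F = "\<lambda>a b c d. eps b * G a c d"
  have F: "quadlin sc ?F"
    by (intro quadlinI klin_cmult klin_multc klin_eps klin_trilin1[OF G] klin_trilin2[OF G]
        klin_trilin3[OF G] klin_id)
  define K where "K p q = eval2 (D q) (\<lambda>d e. eval3 phi (\<lambda>a' b' c'. G (p * a') (d * b') (e * c')))"
    for p q
  have K_inner: "bilin sc (\<lambda>d e. eval3 phi (\<lambda>a' b' c'. G (p * a') (d * b') (e * c')))" for p
    by (intro bilinI klin_eval3 klin_trilin2[OF G] klin_trilin3[OF G] klin_intros)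
  have K: "bilin sc K"
    unfolding K_def
    by (intro bilinI klin_eval2_D[OF K_inner] klin_eval2 klin_eval3 klin_trilin1[OF G] klin_intros)
  have counit_right_G: "eval2 (D h) (\<lambda>x w. c * eps w * G (a * x) y z) = c * G (a * h) y z"
    for c h a y z
    using eval2_D_counit_right[OF klin_trilin1[OF G klin_mult_left[OF klin_id]]]
    by (simp add: mult.assoc eval2_cmult_form)
  have "eval4 (tmul4 (id_id_D D phi) (D_id_id D phi)) ?F = eval3 phi (\<lambda>a b c. eps b * K a c)"
    by (simp add: eval4_tmul4 eval4_id_id_D eval4_D_id_id counit_right_G eval3_cmult_form
        eval2_cmult_form K_def)
  also have "\<dots> = K 1 1"
    by (rule eval3_phi_normal[OF K])
  also have "\<dots> = eval3 phi G"
    unfolding K_def by (subst eval2_D_one[OF K_inner]) simp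
  finally have lhs: "eval4 (tmul4 (id_id_D D phi) (D_id_id D phi)) ?F = eval3 phi G" .
  have normal_G: "eval3 phi (\<lambda>x y z. c * eps y * G (X1 * x) (u * z) v) = c * G X1 u v" for c X1 u v
  proof -
    have "bilin sc (\<lambda>p q. G (X1 * p) (u * q) v)"
      by (intro bilinI klin_trilin1[OF G] klin_trilin2[OF G] klin_intros)
    from eval3_phi_normal[OF this] show ?thesis
      by (simp add: mult.assoc eval3_cmult_form)
  qed
  have counit_left_G: "eval2 (D h) (\<lambda>x y. c * eps x * G X1 (b * y) v) = c * G X1 (b * h) v"
    for c X1 b v h
    using eval2_D_counit_left[OF klin_trilin2[OF G klin_mult_left[OF klin_id]]]
    by (simp add: mult.assoc eval2_cmult_form)
  have "eval4 (tmul4 (tmul4 (one_tensor phi) (id_D_id D phi)) (tensor_one phi)) ?F =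
      eval3 phi (\<lambda>a b c. eps a * eval3 phi (\<lambda>x y z. G x (b * y) (c * z)))"
    by (simp add: eval4_tmul4 eval4_one_tensor eval4_tensor_one eval4_id_D_id normal_G counit_left_G
        eval3_cmult_form)
  also have "\<dots> = eval3 (tmul3 one_tensor_eps_phi phi) G"
    by (simp add: eval3_tmul3 one_tensor_eps_phi_def eval3_map case_prod_unfold scale_mult_left
        trilin_scale2[OF G] eval3_cmult_form) (simp add: eval3_def case_prod_unfold)
  finally show ?thesis
    using lhs teq4D[OF pentagon F] by simp
qed

lemma one_tensor_eps_phi_eq_one: "teq3 sc one_tensor_eps_phi [(1, 1, 1)]"
proof -
  have phi_eq: "teq3 sc phi (tmul3 one_tensor_eps_phi phi)"
    by (simp add: teq3_iff eval3_phi_eq_one_tensor_eps_phi)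
  have "teq3 sc one_tensor_eps_phi (tmul3 one_tensor_eps_phi (tmul3 phi phii))"
    using tmul3_cong2[OF teq3_sym[OF phi_phii], of one_tensor_eps_phi] by simp
  also have "tmul3 one_tensor_eps_phi (tmul3 phi phii) = tmul3 (tmul3 one_tensor_eps_phi phi) phii"
    by (simp add: tmul3_assoc)
  also have "teq3 sc \<dots> (tmul3 phi phii)"
    by (rule tmul3_cong1[OF teq3_sym[OF phi_eq]])
  also have "teq3 sc \<dots> [(1, 1, 1)]"
    by (rule phi_phii)
  finally show ?thesis .
qed

lemma eval3_phi_eps_left:
  assumes C: "bilin sc C"
  shows "eval3 phi (\<lambda>a b c. eps a * C b c) = C 1 1"
proof -
  have "trilin sc (\<lambda>a b c. eps a * C b c)"
    by (intro trilinI klin_multc klin_cmult klin_eps klin_bilin1[OF C] klin_bilin2[OF C] klin_id)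
  from teq3D[OF one_tensor_eps_phi_eq_one this] show ?thesis
    by (simp add: one_tensor_eps_phi_def eval3_map case_prod_unfold bilin_scale1[OF C])
      (simp add: eval3_def case_prod_unfold)
qed

lemma eval3_phii_eps_left:
  assumes C: "bilin sc C"
  shows "eval3 phii (\<lambda>a b c. eps a * C b c) = C 1 1"
proof -
  have G: "trilin sc (\<lambda>a b c. eps a * C b c)"
    by (intro trilinI klin_multc klin_cmult klin_eps klin_bilin1[OF C] klin_bilin2[OF C] klin_id)
  define K where "K p q = eval3 phii (\<lambda>a' b' c'. eps a' * C (p * b') (q * c'))" for p q
  have K: "bilin sc K"
    unfolding K_def
    by (intro bilinI klin_eval3 klin_cmult klin_bilin1[OF C] klin_bilin2[OF C] klin_intros)
  have "C 1 1 = eval3 (tmul3 phi phii) (\<lambda>a b c. eps a * C b c)"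
    using teq3D[OF phi_phii G] by simp
  also have "\<dots> = eval3 phi (\<lambda>a b c. eps a * K b c)"
    by (simp add: eval3_tmul3 K_def mult.assoc eval3_cmult_form)
  also have "\<dots> = K 1 1"
    by (rule eval3_phi_eps_left[OF K])
  finally show ?thesis
    by (simp add: K_def)
qed

lemma D_id_id_cong:
  assumes "teq3 sc xs ys"
  shows "teq4 sc (D_id_id D xs) (D_id_id D ys)"
proof -
  have "eval4 (D_id_id D xs) F = eval4 (D_id_id D ys) F" if F: "quadlin sc F" for F
  proof -
    have "bilin sc (\<lambda>d e. F d e b c)" for b c
      by (intro bilinI klin_quadlin1[OF F] klin_quadlin2[OF F] klin_id)
    then have "trilin sc (\<lambda>a b c. eval2 (D a) (\<lambda>d e. F d e b c))"
      by (intro trilinI klin_eval2_D klin_eval2 klin_quadlin3[OF F] klin_quadlin4[OF F] klin_id)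
    then show ?thesis
      using teq3D[OF assms] by (simp add: eval4_D_id_id)
  qed
  then show ?thesis
    by (simp add: teq4_iff)
qed

lemma D_id_id_mult: "teq4 sc (tmul4 (D_id_id D xs) (D_id_id D ys)) (D_id_id D (tmul3 xs ys))"
proof -
  have "eval4 (tmul4 (D_id_id D xs) (D_id_id D ys)) F = eval4 (D_id_id D (tmul3 xs ys)) F"
    if F: "quadlin sc F" for F
  proof -
    have "bilin sc (\<lambda>d e. F d e b c)" for b c
      by (intro bilinI klin_quadlin1[OF F] klin_quadlin2[OF F] klin_id)
    then show ?thesis
      by (simp add: eval4_tmul4 eval4_D_id_id eval3_tmul3 eval2_D_mult eval2_eval3_swap)
  qed
  then show ?thesis
    by (simp add: teq4_iff)
qed

lemma D_id_id_one: "teq4 sc (D_id_id D [(1, 1, 1)]) [(1, 1, 1, 1)]"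
proof -
  have "eval4 (D_id_id D [(1, 1, 1)]) F = eval4 [(1, 1, 1, 1)] F" if F: "quadlin sc F" for F
  proof -
    have "bilin sc (\<lambda>d e. F d e b c)" for b c
      by (intro bilinI klin_quadlin1[OF F] klin_quadlin2[OF F] klin_id)
    then show ?thesis
      by (simp add: eval4_D_id_id eval2_D_one)
  qed
  then show ?thesis
    by (simp add: teq4_iff)
qed

lemma one_tensor_cong:
  assumes "teq3 sc xs ys"
  shows "teq4 sc (one_tensor xs) (one_tensor ys)"
proof -
  have "eval4 (one_tensor xs) F = eval4 (one_tensor ys) F" if F: "quadlin sc F" for F
  proof -
    have "trilin sc (\<lambda>a b c. F 1 a b c)"
      by (intro trilinI klin_quadlin2[OF F] klin_quadlin3[OF F] klin_quadlin4[OF F] klin_id)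
    then show ?thesis
      using teq3D[OF assms] by (simp add: eval4_one_tensor)
  qed
  then show ?thesis
    by (simp add: teq4_iff)
qed

lemma pentagon_rearranged:
  "teq4 sc (tmul4 (one_tensor phii) (id_id_D D phi))
     (tmul4 (tmul4 (id_D_id D phi) (tensor_one phi)) (D_id_id D phii))"
proof -
  let ?Z = "tmul4 (one_tensor phii) (id_id_D D phi)"
  let ?A = "id_id_D D phi" and ?B = "D_id_id D phi" and ?Bi = "D_id_id D phii"
  let ?M = "id_D_id D phi" and ?N = "tensor_one phi"
  have B_Bi: "teq4 sc (tmul4 ?B ?Bi) [(1, 1, 1, 1)]"
    using teq4_trans[OF D_id_id_mult teq4_trans[OF D_id_id_cong[OF phi_phii] D_id_id_one]] .
  have "teq4 sc ?Z (tmul4 ?Z (tmul4 ?B ?Bi))"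
    using tmul4_cong2[OF teq4_sym[OF B_Bi], of ?Z] by simp
  also have "tmul4 ?Z (tmul4 ?B ?Bi) = tmul4 (one_tensor phii) (tmul4 (tmul4 ?A ?B) ?Bi)"
    by (simp add: tmul4_assoc)
  also have "teq4 sc \<dots> (tmul4 (one_tensor phii) (tmul4 (tmul4 (tmul4 (one_tensor phi) ?M) ?N) ?Bi))"
    by (intro tmul4_cong2 tmul4_cong1 pentagon)
  also have "tmul4 (one_tensor phii) (tmul4 (tmul4 (tmul4 (one_tensor phi) ?M) ?N) ?Bi) =
      tmul4 (tmul4 (one_tensor phii) (one_tensor phi)) (tmul4 (tmul4 ?M ?N) ?Bi)"
    by (simp add: tmul4_assoc)
  also have "teq4 sc \<dots> (tmul4 [(1, 1, 1, 1)] (tmul4 (tmul4 ?M ?N) ?Bi))"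
    using one_tensor_cong[OF phii_phi]
    by (intro tmul4_cong1) (simp only: one_tensor_tmul, simp add: one_tensor_def)
  finally show ?thesis
    by simp
qed

end

section \<open>Quasi-Hopf algebras and the Galois map\<close>

locale quasi_hopf_alg = quasibialg sc D eps phi phii
  for sc :: "'k::field \<Rightarrow> 'h::ring_1 \<Rightarrow> 'h" and D eps phi phii +
  fixes S :: "'h \<Rightarrow> 'h" and \<alpha> \<beta> :: 'h
  assumes quasi_antipode: "quasi_antipode sc D eps phi phii S \<alpha> \<beta>"
begin

lemma anti_alg_map_S: "anti_alg_map sc sc S"
  using quasi_antipode by (simp add: quasi_antipode_def)
lemma klin_S: "klin sc sc S"
  using anti_alg_map_S by (simp add: anti_alg_map_def)
lemma S_mult: "S (x * y) = S y * S x"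
  using anti_alg_map_S by (simp add: anti_alg_map_def)
lemma S_one: "S 1 = 1"
  using anti_alg_map_S by (simp add: anti_alg_map_def)

lemma eval2_D_antipode_alpha:
  assumes g: "klin sc (*) g"
  shows "eval2 (D h) (\<lambda>a b. g (S a * \<alpha> * b)) = eps h * g \<alpha>"
  using quasi_antipode klin_sum_list_pairs[OF g, of "\<lambda>a b. S a * \<alpha> * b" "D h"]
  by (simp add: quasi_antipode_def klin_scale[OF g])
lemma eval2_D_antipode_beta:
  assumes g: "klin sc (*) g"
  shows "eval2 (D h) (\<lambda>a b. g (a * \<beta> * S b)) = eps h * g \<beta>"
  using quasi_antipode klin_sum_list_pairs[OF g, of "\<lambda>a b. a * \<beta> * S b" "D h"]
  by (simp add: quasi_antipode_def klin_scale[OF g])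
lemma eval3_phi_beta_alpha:
  assumes g: "klin sc (*) g"
  shows "eval3 phi (\<lambda>a b c. g (a * \<beta> * S b * \<alpha> * c)) = g 1"
  using quasi_antipode klin_sum_list_triples[OF g, of "\<lambda>a b c. a * \<beta> * S b * \<alpha> * c" phi]
  by (simp add: quasi_antipode_def)
(* C \<circ> \<tau> for the Galois map \<tau>. *)
definition galois_form :: "('h \<Rightarrow> 'h \<Rightarrow> 'k) \<Rightarrow> 'h \<Rightarrow> 'h \<Rightarrow> 'k" where
  "galois_form C u v = eval3 phii (\<lambda>a b c. eval2 (D v) (\<lambda>d e. C (u * (S a * \<alpha> * b) * d) (c * e)))"

lemma galois_form_antipode:
  assumes C: "bilin sc C"
  shows "eval2 (D h) (\<lambda>u v. galois_form C (S u) v) = eval3 phii (\<lambda>a b c. C (S a * \<alpha> * b) (h * c))"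
proof -
  define T where "T p q r = C (S p * \<alpha> * q) r" for p q r
  have T: "trilin sc T"
    unfolding T_def
    by (intro trilinI klin_bilin1[OF C] klin_bilin2[OF C] klin_intros klin_comp[OF _ klin_S])
  define g where "g v t = eval3 phii (\<lambda>a b c. C (S a * t * b) (v * c))" for v t
  have "eval2 (D h) (\<lambda>u v. galois_form C (S u) v) = eval3 (tmul3 phii (id_D D (D h))) T"
    by (simp add: galois_form_def eval3_tmul3 eval3_id_D T_def S_mult eval2_eval3_swap mult.assoc)
  also have "\<dots> = eval3 (tmul3 (D_id D (D h)) phii) T"
    using teq3D[OF quasi_coassoc_inv T] .
  also have "\<dots> = eval2 (D h) (\<lambda>u v. eval2 (D u) (\<lambda>d e. g v (S d * \<alpha> * e)))"
    by (simp add: eval3_tmul3 eval3_D_id T_def g_def S_mult mult.assoc)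
  also have "\<dots> = eval2 (D h) (\<lambda>u v. eps u * g v \<alpha>)"
    unfolding g_def
    by (subst eval2_D_antipode_alpha) (intro klin_eval3 klin_bilin1[OF C] klin_intros, simp)
  also have "\<dots> = g h \<alpha>"
    unfolding g_def by (rule eval2_D_counit_left) (intro klin_eval3 klin_bilin2[OF C] klin_intros)
  finally show ?thesis
    by (simp add: g_def)
qed

(* \<tau>(\<sigma>(1 \<otimes> 1)) = 1 \<otimes> 1 *)
lemma galois_form_section_unit:
  assumes C: "bilin sc C"
  shows "eval3 phi (\<lambda>X1 X2 X3. galois_form C (X1 * \<beta> * S X2) X3) = C 1 1"
proof -
  define F where "F u v w t = C (u * \<beta> * S v * \<alpha> * w) t" for u v w t
  have F: "quadlin sc F"
    unfolding F_def
    by (intro quadlinI klin_bilin1[OF C] klin_bilin2[OF C] klin_intros klin_comp[OF _ klin_S])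
  define g2 where "g2 Y1 Y3 t = eval3 phi (\<lambda>X1 X2 X3. eval3 phii (\<lambda>x1 x2 x3.
      eps x1 * C (Y1 * X1 * \<beta> * S X2 * t * X3 * x2) (Y3 * x3)))" for Y1 Y3 t
  define g3 where "g3 Y1 Y3 t = eval3 phii (\<lambda>x1 x2 x3. eps x1 * C (Y1 * t * x2) (Y3 * x3))"
    for Y1 Y3 t
  define K where "K p q = eval3 phii (\<lambda>x1 x2 x3. eps x1 * C (p * x2) (q * x3))" for p q
  have beta_step:
    "eval2 (D x1) (\<lambda>a b. C (Y1 * X1 * (a * \<beta> * S b) * S X2 * (S d * \<alpha> * e) * X3 * x2) (Y3 * x3))
     = eps x1 * C (Y1 * X1 * \<beta> * S X2 * (S d * \<alpha> * e) * X3 * x2) (Y3 * x3)"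
    for x1 Y1 X1 X2 d e X3 x2 Y3 x3
    by (rule eval2_D_antipode_beta
        [where g = "\<lambda>t. C (Y1 * X1 * t * S X2 * (S d * \<alpha> * e) * X3 * x2) (Y3 * x3)", simplified])
      (intro klin_bilin1[OF C] klin_intros)
  have alpha_step: "eval2 (D Y2) (\<lambda>d e. g2 Y1 Y3 (S d * \<alpha> * e)) = eps Y2 * g2 Y1 Y3 \<alpha>" for Y1 Y2 Y3
    unfolding g2_def
    by (rule eval2_D_antipode_alpha) (intro klin_eval3 klin_cmult klin_bilin1[OF C] klin_intros)
  have phi_step: "eval3 phi (\<lambda>X1 X2 X3. g3 Y1 Y3 (X1 * \<beta> * S X2 * \<alpha> * X3)) = g3 Y1 Y3 1" for Y1 Y3
    unfolding g3_def
    by (rule eval3_phi_beta_alpha) (intro klin_eval3 klin_cmult klin_bilin1[OF C] klin_intros)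
  have K: "bilin sc K"
    unfolding K_def
    by (intro bilinI klin_eval3 klin_cmult klin_bilin1[OF C] klin_bilin2[OF C] klin_intros)
  have "eval3 phi (\<lambda>X1 X2 X3. galois_form C (X1 * \<beta> * S X2) X3) =
      eval4 (tmul4 (one_tensor phii) (id_id_D D phi)) F"
    unfolding galois_form_def
    by (subst eval3_eval3_swap)
      (simp add: eval4_tmul4 eval4_one_tensor eval4_id_id_D F_def S_mult mult.assoc)
  also have "\<dots> = eval4 (tmul4 (tmul4 (id_D_id D phi) (tensor_one phi)) (D_id_id D phii)) F"
    using teq4D[OF pentagon_rearranged F] .
  also have "\<dots> = eval3 phi (\<lambda>Y1 Y2 Y3. eval2 (D Y2) (\<lambda>d e. eval3 phi (\<lambda>X1 X2 X3. eval3 phii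
      (\<lambda>x1 x2 x3. eval2 (D x1) (\<lambda>a b.
        C (Y1 * X1 * (a * \<beta> * S b) * S X2 * (S d * \<alpha> * e) * X3 * x2) (Y3 * x3))))))"
    by (simp add: eval4_tmul4 eval4_tensor_one eval4_id_D_id eval4_D_id_id F_def S_mult mult.assoc)
  also have "\<dots> = eval3 phi (\<lambda>Y1 Y2 Y3. eval2 (D Y2) (\<lambda>d e. g2 Y1 Y3 (S d * \<alpha> * e)))"
    unfolding beta_step g2_def by simp
  also have "\<dots> = eval3 phi (\<lambda>Y1 Y2 Y3. eps Y2 * g2 Y1 Y3 \<alpha>)"
    by (simp only: alpha_step)
  also have "\<dots> =
      eval3 phi (\<lambda>Y1 Y2 Y3. eps Y2 * eval3 phi (\<lambda>X1 X2 X3. g3 Y1 Y3 (X1 * \<beta> * S X2 * \<alpha> * X3)))"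
    by (simp add: g2_def g3_def mult.assoc)
  also have "\<dots> = eval3 phi (\<lambda>Y1 Y2 Y3. eps Y2 * K Y1 Y3)"
    by (simp only: phi_step) (simp add: g3_def K_def)
  also have "\<dots> = K 1 1"
    by (rule eval3_phi_normal[OF K])
  also have "\<dots> = C 1 1"
    unfolding K_def by (simp add: eval3_phii_eps_left[OF C])
  finally show ?thesis .
qed

(* \<tau> \<circ> \<sigma> = id *)
lemma galois_form_section:
  assumes C: "bilin sc C"
  shows "eval3 phi (\<lambda>X1 X2 X3.
      eval2 (D y) (\<lambda>y1 y2. galois_form C (x * X1 * \<beta> * S (y1 * X2)) (y2 * X3)))
    = C x y"
proof -
  define G where "G X1 X2 X3 p q = eval2 (D X3) (\<lambda>d' e'. C (x * X1 * \<beta> * S X2 * p * d') (q * e'))"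
    for X1 X2 X3 p q
  have G: "bilin sc (G X1 X2 X3)" for X1 X2 X3
    unfolding G_def by (intro bilinI klin_eval2 klin_bilin1[OF C] klin_bilin2[OF C] klin_intros)
  have D_mult_C: "eval2 (D (a * b)) (\<lambda>d e. C (P * d) (Q * e)) =
      eval2 (D a) (\<lambda>d e. eval2 (D b) (\<lambda>d' e'. C (P * (d * d')) (Q * (e * e'))))" for P Q a b
    by (rule eval2_D_mult) (intro bilinI klin_bilin1[OF C] klin_bilin2[OF C] klin_intros)
  have "eval2 (D y) (\<lambda>y1 y2. galois_form C (x * X1 * \<beta> * S (y1 * X2)) (y2 * X3)) =
      eval2 (D y) (\<lambda>u v. galois_form (G X1 X2 X3) (S u) v)" for X1 X2 X3
    by (simp only: galois_form_def D_mult_C) (simp add: G_def S_mult mult.assoc)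
  also have "\<dots> X1 X2 X3 = eval3 phii (\<lambda>a b c. G X1 X2 X3 (S a * \<alpha> * b) (y * c))" for X1 X2 X3
    by (rule galois_form_antipode[OF G])
  finally have "eval3 phi (\<lambda>X1 X2 X3.
      eval2 (D y) (\<lambda>y1 y2. galois_form C (x * X1 * \<beta> * S (y1 * X2)) (y2 * X3)))
      = eval3 phi (\<lambda>X1 X2 X3. galois_form (\<lambda>p q. C (x * p) (y * q)) (X1 * \<beta> * S X2) X3)"
    by (simp add: G_def galois_form_def mult.assoc)
  also have "\<dots> = C x y"
    by (rule galois_form_section_unit[of "\<lambda>p q. C (x * p) (y * q)", simplified])
      (intro bilinI klin_bilin1[OF C] klin_bilin2[OF C] klin_intros)
  finally show ?thesis .
qed

end

section \<open>Quotients onto finite-dimensional quasibialgebras\<close>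

definition map3 :: "('a \<Rightarrow> 'b) \<Rightarrow> ('a \<times> 'a \<times> 'a) list \<Rightarrow> ('b \<times> 'b \<times> 'b) list" where
  "map3 f xs = map (\<lambda>(a, b, c). (f a, f b, f c)) xs"

lemma eval3_map3: "eval3 (map3 f xs) T = eval3 xs (\<lambda>a b c. T (f a) (f b) (f c))"
  by (induct xs) (auto simp: map3_def)

lemma tmul3_map3:
  "(\<And>x y. f (x * y) = f x * f y) \<Longrightarrow> tmul3 (map3 f xs) (map3 f ys) = map3 f (tmul3 xs ys)"
  by (induct xs) (auto simp: map3_def tmul3_def case_prod_unfold)

locale quasi_hopf_quotient =
  H: quasi_hopf_alg scH DH epsH phiH phiiH S \<alpha> \<beta> + Q: quasibialg scQ DQ epsQ phiQ phiiQ
  for scH :: "'k::field \<Rightarrow> 'h::ring_1 \<Rightarrow> 'h" and DH epsH phiH phiiH S \<alpha> \<beta>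
    and scQ :: "'k \<Rightarrow> 'q::ring_1 \<Rightarrow> 'q" and DQ epsQ phiQ phiiQ +
  fixes \<nu> :: "'h \<Rightarrow> 'q"
  assumes morphism: "qba_morphism scH DH epsH phiH scQ DQ epsQ phiQ \<nu>"
    and surj: "surj \<nu>" and fin_dim: "fin_dim scQ"
begin

lemma alg_map_nu: "alg_map scH scQ \<nu>"
  using morphism by (simp add: qba_morphism_def)
lemma klin_nu: "klin scH scQ \<nu>"
  using alg_map_nu by (simp add: alg_map_def)
lemma nu_add[simp]: "\<nu> (x + y) = \<nu> x + \<nu> y"
  using klin_nu by (simp add: klin_def)
lemma nu_scale[simp]: "\<nu> (scH c x) = scQ c (\<nu> x)"
  using klin_nu by (simp add: klin_def)
lemma nu_mult[simp]: "\<nu> (x * y) = \<nu> x * \<nu> y"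
  using alg_map_nu by (simp add: alg_map_def)
lemma nu_one[simp]: "\<nu> 1 = 1"
  using alg_map_nu by (simp add: alg_map_def)
lemma nu_diff: "\<nu> (x - y) = \<nu> x - \<nu> y"
  using klin_diff[OF klin_nu] .
lemma DQ_nu: "teq2 scQ (DQ (\<nu> h)) (map (\<lambda>(a, b). (\<nu> a, \<nu> b)) (DH h))"
  using morphism by (simp add: qba_morphism_def)
lemma epsQ_nu[simp]: "epsQ (\<nu> h) = epsH h"
  using morphism by (simp add: qba_morphism_def)
lemma phi_nu: "teq3 scQ (map3 \<nu> phiH) phiQ"
  using morphism by (simp add: qba_morphism_def map3_def)

lemma phii_nu: "teq3 scQ (map3 \<nu> phiiH) phiiQ"
proof -
  have map3_cong: "teq3 scQ (map3 \<nu> xs) (map3 \<nu> ys)" if "teq3 scH xs ys" for xs ys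
  proof -
    have "trilin scH (\<lambda>a b c. T (\<nu> a) (\<nu> b) (\<nu> c))" if T: "trilin scQ T" for T
      by (intro trilinI klin_comp[OF klin_nu] klin_trilin1[OF T] klin_trilin2[OF T]
          klin_trilin3[OF T] Q.klin_id)
    then show ?thesis
      using teq3D[OF \<open>teq3 scH xs ys\<close>] by (simp add: teq3_iff eval3_map3)
  qed
  have "teq3 scQ (tmul3 (map3 \<nu> phiH) (map3 \<nu> phiiH)) [(1, 1, 1)]"
    using map3_cong[OF H.phi_phii] by (simp add: tmul3_map3) (simp add: map3_def)
  have "teq3 scQ (map3 \<nu> phiiH) (tmul3 (tmul3 phiiQ phiQ) (map3 \<nu> phiiH))"
    using Q.tmul3_cong1[OF teq3_sym[OF Q.phii_phi], of "map3 \<nu> phiiH"] by simp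
  also have "teq3 scQ \<dots> (tmul3 (tmul3 phiiQ (map3 \<nu> phiH)) (map3 \<nu> phiiH))"
    by (intro Q.tmul3_cong1 Q.tmul3_cong2 teq3_sym[OF phi_nu])
  also have "tmul3 (tmul3 phiiQ (map3 \<nu> phiH)) (map3 \<nu> phiiH) =
      tmul3 phiiQ (tmul3 (map3 \<nu> phiH) (map3 \<nu> phiiH))"
    by (simp add: tmul3_assoc)
  also have "teq3 scQ \<dots> (tmul3 phiiQ [(1, 1, 1)])"
    by (rule Q.tmul3_cong2) fact
  finally show ?thesis
    by simp
qed

lemma bilin_comp_nu:
  assumes C: "bilin scQ C"
  shows "bilin scH (\<lambda>a b. C (\<nu> a) (\<nu> b))"
  by (intro bilinI klin_comp[OF klin_nu] klin_bilin1[OF C] klin_bilin2[OF C] Q.klin_id)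

lemma eval2_DQ_nu: "bilin scQ B \<Longrightarrow> eval2 (DQ (\<nu> h)) B = eval2 (DH h) (\<lambda>a b. B (\<nu> a) (\<nu> b))"
  using teq2D[OF DQ_nu] by (simp add: eval2_map case_prod_unfold eval2_def comp_def)

(* C \<circ> \<tau> for the Galois map of Q, built from S, \<alpha> and \<phi>^-1 of H since Q has no antipode yet. *)
definition galois_formQ :: "('q \<Rightarrow> 'q \<Rightarrow> 'k) \<Rightarrow> 'q \<Rightarrow> 'q \<Rightarrow> 'k" where
  "galois_formQ C u v =
     eval3 phiiH (\<lambda>a b c. eval2 (DQ v) (\<lambda>d e. C (u * \<nu> (S a * \<alpha> * b) * d) (\<nu> c * e)))"

lemma galois_formQ_nu:
  assumes C: "bilin scQ C"
  shows "galois_formQ C (\<nu> u) (\<nu> v) = H.galois_form (\<lambda>p q. C (\<nu> p) (\<nu> q)) u v"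
proof -
  have "bilin scQ (\<lambda>d e. C (P * d) (R * e))" for P R
    by (intro bilinI klin_bilin1[OF C] klin_bilin2[OF C] Q.klin_intros)
  then show ?thesis
    unfolding galois_formQ_def H.galois_form_def by (simp add: eval2_DQ_nu)
qed

lemma bilin_galois_formQ:
  assumes C: "bilin scQ C"
  shows "bilin scQ (galois_formQ C)"
proof -
  have "bilin scQ (\<lambda>d e. C (P * d) (R * e))" for P R
    by (intro bilinI klin_bilin1[OF C] klin_bilin2[OF C] Q.klin_intros)
  then show ?thesis
    unfolding galois_formQ_def
    by (intro bilinI klin_eval3 Q.klin_eval2_D klin_eval2 klin_bilin1[OF C] klin_bilin2[OF C]
        Q.klin_intros)
qed

lemma linear_galois_formQ: "Vector_Spaces.linear scale_form scale_form galois_formQ"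
  unfolding Vector_Spaces.linear_iff
  by (simp add: forms.vector_space_axioms galois_formQ_def scale_form_def fun_eq_iff
      eval2_add_form eval3_add_form eval2_cmult_form eval3_cmult_form)

lemma galois_formQ_inj:
  assumes C: "bilin scQ C" and zero: "galois_formQ C = 0"
  shows "C = 0"
proof (intro ext)
  fix u v
  obtain x y where xy: "u = \<nu> x" "v = \<nu> y"
    using surj by (metis surjD)
  have "C u v = eval3 phiH (\<lambda>X1 X2 X3. eval2 (DH y) (\<lambda>y1 y2.
      H.galois_form (\<lambda>p q. C (\<nu> p) (\<nu> q)) (x * X1 * \<beta> * S (y1 * X2)) (y2 * X3)))"
    using H.galois_form_section[OF bilin_comp_nu[OF C]] xy by simp
  also have "\<dots> = 0"
    by (simp add: galois_formQ_nu[OF C, symmetric] zero)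
  finally show "C u v = 0 u v"
    by simp
qed

lemma nu_S_kernel:
  assumes i: "\<nu> i = 0"
  shows "\<nu> (S i) = 0"
proof -
  have vanish: "eval2 (DH i) (\<lambda>u v. B (\<nu> (S u)) (\<nu> v)) = 0" if B: "bilin scQ B" for B
  proof -
    obtain C where C: "bilin scQ C" and B_eq: "galois_formQ C = B"
      using Q.bilin_form_map_surj[OF fin_dim bilin_galois_formQ linear_galois_formQ
          galois_formQ_inj B]
      by blast
    have "eval2 (DH i) (\<lambda>u v. B (\<nu> (S u)) (\<nu> v)) =
        eval2 (DH i) (\<lambda>u v. H.galois_form (\<lambda>p q. C (\<nu> p) (\<nu> q)) (S u) v)"
      by (simp add: B_eq[symmetric] galois_formQ_nu[OF C])
    also have "\<dots> = eval3 phiiH (\<lambda>a b c. C (\<nu> (S a * \<alpha> * b)) (\<nu> (i * c)))"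
      by (rule H.galois_form_antipode[OF bilin_comp_nu[OF C]])
    also have "\<dots> = 0"
      using i klin_zero[OF klin_bilin2[OF C Q.klin_id]] by simp
    finally show ?thesis .
  qed
  show ?thesis
  proof (rule Q.functionals_separate[OF fin_dim])
    fix f assume f: "klin scQ (*) f"
    have "f (\<nu> (S i)) = eval2 (DH i) (\<lambda>u v. epsH v * f (\<nu> (S u)))"
      by (rule H.eval2_D_counit_right[symmetric])
        (intro klin_comp[OF H.klin_S] klin_comp[OF klin_nu f])
    also have "\<dots> = eval2 (DH i) (\<lambda>u v. f (\<nu> (S u)) * epsQ (\<nu> v))"
      by (simp add: mult.commute)
    also have "\<dots> = 0"
      by (rule vanish) (intro bilinI klin_multc klin_cmult f Q.klin_eps)
    finally show "f (\<nu> (S i)) = f 0"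
      using klin_zero[OF f] by simp
  qed
qed

definition Sbar :: "'q \<Rightarrow> 'q" where
  "Sbar q = \<nu> (S (SOME h. \<nu> h = q))"

lemma Sbar_nu[simp]: "Sbar (\<nu> h) = \<nu> (S h)"
proof -
  let ?h = "SOME h'. \<nu> h' = \<nu> h"
  have "\<nu> ?h = \<nu> h"
    by (rule someI) (rule refl)
  then have "\<nu> (S (?h - h)) = 0"
    by (intro nu_S_kernel) (simp add: nu_diff)
  then show ?thesis
    by (simp add: Sbar_def klin_diff[OF H.klin_S] nu_diff)
qed

lemma anti_alg_map_Sbar: "anti_alg_map scQ scQ Sbar"
  unfolding anti_alg_map_def klin_def
proof (intro conjI allI)
  fix x y c
  obtain a b where ab: "x = \<nu> a" "y = \<nu> b"
    using surj by (metis surjD)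
  show "Sbar (x + y) = Sbar x + Sbar y"
    using klin_add[OF H.klin_S] by (simp add: ab nu_add[symmetric] del: nu_add)
  show "Sbar (scQ c x) = scQ c (Sbar x)"
    using klin_scale[OF H.klin_S] by (simp add: ab nu_scale[symmetric] del: nu_scale)
  show "Sbar (x * y) = Sbar y * Sbar x"
    by (simp add: ab nu_mult[symmetric] H.S_mult del: nu_mult)
  show "Sbar 1 = 1"
    using Sbar_nu[of 1] by (simp add: H.S_one)
qed

lemma klin_Sbar: "klin scQ scQ f \<Longrightarrow> klin scQ scQ (\<lambda>x. Sbar (f x))"
  using anti_alg_map_Sbar klin_comp by (auto simp: anti_alg_map_def)

lemma sum_list_DQ_nu:
  assumes g1: "\<And>b. klin scQ scQ (\<lambda>a. g a b)" and g2: "\<And>a. klin scQ scQ (\<lambda>b. g a b)"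
  shows "sum_list (map (\<lambda>(a, b). g a b) (DQ (\<nu> h))) =
    sum_list (map (\<lambda>(a, b). g (\<nu> a) (\<nu> b)) (DH h))"
proof -
  have "sum_list (map (\<lambda>(a, b). g a b) (DQ (\<nu> h))) =
      sum_list (map (\<lambda>(a, b). g a b) (map (\<lambda>(a, b). (\<nu> a, \<nu> b)) (DH h)))"
    by (rule Q.sum_list_teq2[OF fin_dim DQ_nu])
      (intro bilinI klin_comp[OF g1] klin_comp[OF g2], assumption+)
  then show ?thesis
    by (simp add: case_prod_unfold comp_def)
qed

lemma sum_list_map3_nu:
  assumes xy: "teq3 scQ (map3 \<nu> xs) ys"
    and g1: "\<And>b c. klin scQ scQ (\<lambda>a. g a b c)" and g2: "\<And>a c. klin scQ scQ (\<lambda>b. g a b c)"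
    and g3: "\<And>a b. klin scQ scQ (\<lambda>c. g a b c)"
  shows "sum_list (map (\<lambda>(a, b, c). g a b c) ys) =
    sum_list (map (\<lambda>(a, b, c). g (\<nu> a) (\<nu> b) (\<nu> c)) xs)"
proof -
  have "sum_list (map (\<lambda>(a, b, c). g a b c) (map3 \<nu> xs)) = sum_list (map (\<lambda>(a, b, c). g a b c) ys)"
    by (rule Q.sum_list_teq3[OF fin_dim xy])
      (intro trilinI klin_comp[OF g1] klin_comp[OF g2] klin_comp[OF g3], assumption+)
  then show ?thesis
    by (simp add: map3_def case_prod_unfold comp_def)
qed

lemma quasi_antipode_Sbar: "quasi_antipode scQ DQ epsQ phiQ phiiQ Sbar (\<nu> \<alpha>) (\<nu> \<beta>)"
  unfolding quasi_antipode_def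
proof (intro conjI allI anti_alg_map_Sbar)
  fix q
  obtain h where q: "q = \<nu> h"
    using surj by (metis surjD)
  have "sum_list (map (\<lambda>(a, b). Sbar a * \<nu> \<alpha> * b) (DQ q)) =
      \<nu> (sum_list (map (\<lambda>(a, b). S a * \<alpha> * b) (DH h)))"
    unfolding q klin_sum_list[OF klin_nu]
    by (subst sum_list_DQ_nu, (intro klin_Sbar Q.klin_intros)+, simp add: case_prod_unfold)
  then show "sum_list (map (\<lambda>(a, b). Sbar a * \<nu> \<alpha> * b) (DQ q)) = scQ (epsQ q) (\<nu> \<alpha>)"
    using H.quasi_antipode by (simp add: quasi_antipode_def q)
  have "sum_list (map (\<lambda>(a, b). a * \<nu> \<beta> * Sbar b) (DQ q)) =
      \<nu> (sum_list (map (\<lambda>(a, b). a * \<beta> * S b) (DH h)))"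
    unfolding q klin_sum_list[OF klin_nu]
    by (subst sum_list_DQ_nu, (intro klin_Sbar Q.klin_intros)+, simp add: case_prod_unfold)
  then show "sum_list (map (\<lambda>(a, b). a * \<nu> \<beta> * Sbar b) (DQ q)) = scQ (epsQ q) (\<nu> \<beta>)"
    using H.quasi_antipode by (simp add: quasi_antipode_def q)
next
  have "sum_list (map (\<lambda>(a, b, c). a * \<nu> \<beta> * Sbar b * \<nu> \<alpha> * c) phiQ) =
      \<nu> (sum_list (map (\<lambda>(a, b, c). a * \<beta> * S b * \<alpha> * c) phiH))"
    unfolding klin_sum_list[OF klin_nu]
    by (subst sum_list_map3_nu[OF phi_nu], (intro klin_Sbar Q.klin_intros)+,
        simp add: case_prod_unfold)
  then show "sum_list (map (\<lambda>(a, b, c). a * \<nu> \<beta> * Sbar b * \<nu> \<alpha> * c) phiQ) = 1"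
    using H.quasi_antipode by (simp add: quasi_antipode_def)
next
  have "sum_list (map (\<lambda>(a, b, c). Sbar a * \<nu> \<alpha> * b * \<nu> \<beta> * Sbar c) phiiQ) =
      \<nu> (sum_list (map (\<lambda>(a, b, c). S a * \<alpha> * b * \<beta> * S c) phiiH))"
    unfolding klin_sum_list[OF klin_nu]
    by (subst sum_list_map3_nu[OF phii_nu], (intro klin_Sbar Q.klin_intros)+,
        simp add: case_prod_unfold)
  then show "sum_list (map (\<lambda>(a, b, c). Sbar a * \<nu> \<alpha> * b * \<nu> \<beta> * Sbar c) phiiQ) = 1"
    using H.quasi_antipode by (simp add: quasi_antipode_def)
qed

end

theorem theorem2p1:
  fixes scH :: "'k::field \<Rightarrow> 'h::ring_1 \<Rightarrow> 'h"
    and DH :: "'h \<Rightarrow> ('h \<times> 'h) list" and epsH :: "'h \<Rightarrow> 'k"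
    and phiH phiiH :: "('h \<times> 'h \<times> 'h) list"
    and S :: "'h \<Rightarrow> 'h" and \<alpha> \<beta> :: 'h
    and scQ :: "'k \<Rightarrow> 'q::ring_1 \<Rightarrow> 'q"
    and DQ :: "'q \<Rightarrow> ('q \<times> 'q) list" and epsQ :: "'q \<Rightarrow> 'k"
    and phiQ phiiQ :: "('q \<times> 'q \<times> 'q) list"
    and \<nu> :: "'h \<Rightarrow> 'q"
  assumes H: "quasi_hopf scH DH epsH phiH phiiH S \<alpha> \<beta>"
    and Q: "quasibialgebra scQ DQ epsQ phiQ phiiQ"
    and Qfin: "fin_dim scQ"
    and mor: "qba_morphism scH DH epsH phiH scQ DQ epsQ phiQ \<nu>"
    and surj: "surj \<nu>"
  shows "(\<forall>x. \<nu> x = 0 \<longrightarrow> \<nu> (S x) = 0) \<and>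
         (\<exists>Sbar. anti_alg_map scQ scQ Sbar \<and> (\<forall>h. Sbar (\<nu> h) = \<nu> (S h)) \<and>
                 quasi_antipode scQ DQ epsQ phiQ phiiQ Sbar (\<nu> \<alpha>) (\<nu> \<beta>) \<and>
                 qhopf_morphism scH DH epsH phiH S \<alpha> \<beta> scQ DQ epsQ phiQ Sbar (\<nu> \<alpha>) (\<nu> \<beta>) \<nu>)"
proof -
  interpret quasi_hopf_quotient scH DH epsH phiH phiiH S \<alpha> \<beta> scQ DQ epsQ phiQ phiiQ \<nu>
    using H Q Qfin mor surj by unfold_locales (simp_all add: quasi_hopf_def)
  have "qhopf_morphism scH DH epsH phiH S \<alpha> \<beta> scQ DQ epsQ phiQ Sbar (\<nu> \<alpha>) (\<nu> \<beta>) \<nu>"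
    using mor by (simp add: qhopf_morphism_def)
  then show ?thesis
    using nu_S_kernel anti_alg_map_Sbar quasi_antipode_Sbar by auto
qed

end
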